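(* Let $n>1$, let $U$ be the purely odd $(0|n)$-dimensional standard $\mathfrak{gl}(n)$-module, $\mathfrak{g}_{-1}=U$, $\mathfrak{g}_0=\mathfrak{gl}(n)$ and $\hat{\mathfrak{g}}_0=\mathfrak{sl}(n)$ (so that $\mathfrak{g}_*(\mathfrak{g}_{-1},\mathfrak{g}_0)=\mathfrak{vect}(0|n)$ and $\mathfrak{g}_*(\mathfrak{g}_{-1},\hat{\mathfrak{g}}_0)=\mathfrak{svect}(0|n)$; this is the case $m=1$ of the standard $\mathbb{Z}$-grading of $\mathfrak{sl}(m|n)$). Then a) $H^{k,2}_{\mathfrak{g}_0}=0$ for every $k>0$; b) $H^{k,2}_{\hat{\mathfrak{g}}_0}=\Pi^n(\mathbb{C})\,\delta_{kn}$, i.e. $H^{n,2}_{\hat{\mathfrak{g}}_0}$ is the trivial one-dimensional $\mathfrak{sl}(n)$-module of parity $n \bmod 2$ and $H^{k,2}_{\hat{\mathfrak{g}}_0}=0$ for $k\neq n$, $k>0$.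
   Context: Cartan prolongation of $(\mathfrak{g}_{-1},\mathfrak{g}_0)$: $\mathfrak{g}_i=(\mathfrak{g}_{i-1}\otimes\mathfrak{g}_{-1}^* )\cap(\mathfrak{g}_{i-2}\otimes S^2\mathfrak{g}_{-1}^* )$ for $i\ge1$ (super-symmetric powers), $\mathfrak{g}_*=\bigoplus_{i\ge-1}\mathfrak{g}_i$. Spencer complex: $C^{k,s}_{\mathfrak{g}_0}=\mathfrak{g}_{k-s}\otimes\Lambda^s(\mathfrak{g}_{-1}^* )$ (super-exterior power) with differential $(\partial f)(g_1,\dots,g_{s+1})=\sum_i(-1)^i[f(g_1,\dots,\widehat{g_{s+1-i}},\dots,g_{s+1}),g_{s+1-i}]$ (signs by the sign rule); $H^{k,s}_{\mathfrak{g}_0}$ is its cohomology in bidegree $(k,s)$, similarly for $\hat{\mathfrak{g}}_0$. $\mathfrak{vect}(0|n)$ is the derivation algebra of the Grassmann algebra on $n$ generators, $\mathfrak{svect}(0|n)$ its divergence-free part. $\Pi$ is the change of parity functor. *)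

theory Defs
  imports Complex_Main
begin

text \<open>U = C^(0|n) purely odd, basis e_0..e_(n-1).
  An element of g_m (m >= -1), viewed as an element of U (x) (U^* )^(m+1), i.e. as a
  multilinear map U^(m+1) -> U, is a function T with T xs i = i-th coordinate of
  T(e_(xs!0), e_(xs!1), ...). The first argument is the outermost one:
  g_m is a subspace of Hom(g_(-1), g_(m-1)), and T(e_l) = (\<lambda>xs. T (l # xs)).\<close>

type_synonym tens = "nat list \<Rightarrow> nat \<Rightarrow> complex"
type_synonym cochain = "nat list \<Rightarrow> tens"

definition gl_alg :: "nat \<Rightarrow> tens set" where
  "gl_alg n = {T. \<forall>xs i. T xs i \<noteq> 0 \<longrightarrow> (\<exists>a. xs = [a] \<and> a < n) \<and> i < n}"

definition sl_alg :: "nat \<Rightarrow> tens set" where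
  "sl_alg n = {T \<in> gl_alg n. (\<Sum>a<n. T [a] a) = 0}"

text \<open>Cartan prolongation: prolong n G0 j is g_(j-1).
  g_(-1) = U, g_0 = G0, and g_i = (g_(i-1) (x) U^* ) \<inter> (g_(i-2) (x) S^2 U^* ) for i >= 1,
  super-symmetry in two odd arguments being antisymmetry.\<close>
fun prolong :: "nat \<Rightarrow> tens set \<Rightarrow> nat \<Rightarrow> tens set" where
  "prolong n G0 0 = {T. \<forall>xs i. T xs i \<noteq> 0 \<longrightarrow> xs = [] \<and> i < n}"
| "prolong n G0 (Suc 0) = G0"
| "prolong n G0 (Suc (Suc j)) =
     {T. (\<forall>xs i. T xs i \<noteq> 0 \<longrightarrow> xs \<noteq> [] \<and> hd xs < n)
       \<and> (\<forall>l<n. (\<lambda>xs. T (l # xs)) \<in> prolong n G0 (Suc j))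
       \<and> (\<forall>a b xs i. T (a # b # xs) i = - T (b # a # xs) i)}"

text \<open>Spencer cochains C^(k,s) = g_(k-s) (x) \<Lambda>^s(U^* ): s-linear maps on the odd space U,
  super-antisymmetric (= symmetric, since the arguments are odd), with values in g_(k-s).
  f ys is the value on (e_(ys!0), ..., e_(ys!(s-1))).\<close>
definition cochains :: "nat \<Rightarrow> tens set \<Rightarrow> nat \<Rightarrow> nat \<Rightarrow> cochain set" where
  "cochains n G0 k s =
    {f. (\<forall>ys. f ys \<noteq> (\<lambda>_ _. 0) \<longrightarrow> length ys = s \<and> (\<forall>y\<in>set ys. y < n))
      \<and> (\<forall>ys. f ys \<in> (if s \<le> k + 1 then prolong n G0 (k + 1 - s) else {\<lambda>_ _. 0}))
      \<and> (\<forall>ys zs a b. f (ys @ a # b # zs) = f (ys @ b # a # zs))}"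

text \<open>Spencer differential: (df)(g_1..g_(s+1)) = sum_j [f(.., g_j omitted, ..), g_j],
  where [T, e_l] = T(e_l) is the bracket of g_m with g_(-1) in the prolongation.\<close>
definition spencer_d :: "cochain \<Rightarrow> cochain" where
  "spencer_d f = (\<lambda>ys xs i. \<Sum>j<length ys. f (take j ys @ drop (Suc j) ys) ((ys ! j) # xs) i)"

definition cocycles :: "nat \<Rightarrow> tens set \<Rightarrow> nat \<Rightarrow> nat \<Rightarrow> cochain set" where
  "cocycles n G0 k s = {f \<in> cochains n G0 k s. spencer_d f = (\<lambda>_ _ _. 0)}"

definition coboundaries :: "nat \<Rightarrow> tens set \<Rightarrow> nat \<Rightarrow> nat \<Rightarrow> cochain set" where
  "coboundaries n G0 k s = spencer_d ` cochains n G0 k (s - 1)"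

definition spencer_H_zero :: "nat \<Rightarrow> tens set \<Rightarrow> nat \<Rightarrow> nat \<Rightarrow> bool" where
  "spencer_H_zero n G0 k s \<longleftrightarrow> cocycles n G0 k s \<subseteq> coboundaries n G0 k s"

definition spencer_H_dim1 :: "nat \<Rightarrow> tens set \<Rightarrow> nat \<Rightarrow> nat \<Rightarrow> bool" where
  "spencer_H_dim1 n G0 k s \<longleftrightarrow>
     (\<exists>z \<in> cocycles n G0 k s. z \<notin> coboundaries n G0 k s \<and>
        (\<forall>w \<in> cocycles n G0 k s. \<exists>c::complex.
            (\<lambda>ys xs i. w ys xs i - c * z ys xs i) \<in> coboundaries n G0 k s))"

text \<open>Action of X \<in> g_0 (matrix: X e_a = sum_i X [a] i e_i) on g_m (the bracket [X,T])
  and on cochains (X acts on values and, contragrediently, on arguments).\<close>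
definition tens_act :: "nat \<Rightarrow> tens \<Rightarrow> tens \<Rightarrow> tens" where
  "tens_act n X T = (\<lambda>xs i. (\<Sum>a<n. T xs a * X [a] i)
      - (\<Sum>j<length xs. \<Sum>b<n. X [xs ! j] b * T (xs[j := b]) i))"

definition cochain_act :: "nat \<Rightarrow> tens \<Rightarrow> cochain \<Rightarrow> cochain" where
  "cochain_act n X f = (\<lambda>ys xs i. tens_act n X (f ys) xs i
      - (\<Sum>j<length ys. \<Sum>b<n. X [ys ! j] b * f (ys[j := b]) xs i))"

definition spencer_H_trivial :: "nat \<Rightarrow> tens set \<Rightarrow> nat \<Rightarrow> nat \<Rightarrow> bool" where
  "spencer_H_trivial n G0 k s \<longleftrightarrow>
     (\<forall>X \<in> G0. \<forall>w \<in> cocycles n G0 k s. cochain_act n X w \<in> coboundaries n G0 k s)"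

text \<open>Parity (0 even, 1 odd) of the homogeneous space C^(k,s) = g_(k-s) (x) \<Lambda>^s(U^* ):
  g_m \<subseteq> U (x) (U^* )^(m+1) with U odd has parity m+2 mod 2, \<Lambda>^s(U^* ) has parity s mod 2.\<close>
definition spencer_parity :: "nat \<Rightarrow> nat \<Rightarrow> nat" where
  "spencer_parity k s = ((1 + (k + 1 - s)) + s) mod 2"

end

theory Submission
  imports Defs
begin

text \<open>With \<open>U\<close> odd, super-symmetric powers of \<open>U\<^sup>*\<close> are exterior powers, so the prolongation of
  \<open>\<gg>\<ll>(n)\<close> consists of the alternating tensors \<open>U \<otimes> \<Lambda>\<^sup>m(U\<^sup>*)\<close> and that of \<open>\<ss>\<ll>(n)\<close>
  of their divergence-free part.

  A \<open>\<gg>\<ll>(n)\<close>-cocycle \<open>f\<close> of degree \<open>k\<close> is the differential of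
  \<open>h(a) = (k + 1)\<inverse> \<Sum>\<^sub>c e\<^sup>c \<and> f(a, c)\<close>, by Euler's identity for forms.

  An \<open>\<ss>\<ll>(n)\<close>-cocycle \<open>w\<close> is therefore \<open>dh\<close> for a \<open>\<gg>\<ll>(n)\<close>-cochain \<open>h\<close>, and since \<open>w\<close> is
  divergence-free, the divergences of the \<open>h(e\<^sub>a)\<close> are antisymmetric in \<open>a\<close> and the remaining
  arguments: they are the contractions of one \<open>k\<close>-form \<open>E\<close>. If \<open>k \<noteq> n\<close>, then \<open>E\<close> is the
  divergence of \<open>\<phi> = (n - k)\<inverse> \<Sum>\<^sub>i e\<^sub>i \<otimes> (e\<^sup>i \<and> E)\<close>, and adding the closed cochain
  \<open>a \<mapsto> [\<phi>, e\<^sub>a]\<close> makes \<open>h\<close> divergence-free. If \<open>k = n\<close>, then \<open>E\<close> is a multiple \<open>c\<close> of the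
  volume form and \<open>w - c d(a \<mapsto> e\<^sub>a \<otimes> vol)\<close> is a coboundary, while \<open>d(a \<mapsto> e\<^sub>a \<otimes> vol)\<close> is not:
  a closed \<open>\<gg>\<ll>(n)\<close>-cochain of degree \<open>n\<close> would be the differential of an \<open>(n + 1)\<close>-form,
  and these vanish. Finally \<open>\<ss>\<ll>(n)\<close> acts trivially on \<open>H\<^sup>n\<^sup>,\<^sup>2\<close> because its action commutes
  with \<open>d\<close> and acts on \<open>n\<close>-forms by the trace.\<close>

section \<open>Alternating functions of lists\<close>

definition alternating :: "('a list \<Rightarrow> complex) \<Rightarrow> bool" where
  "alternating F \<longleftrightarrow> (\<forall>ys a b zs. F (ys @ a # b # zs) = - F (ys @ b # a # zs))"

definition drop_nth :: "nat \<Rightarrow> 'a list \<Rightarrow> 'a list" where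
  "drop_nth j xs = take j xs @ drop (Suc j) xs"

lemma drop_nth_Cons_0 [simp]: "drop_nth 0 (x # xs) = xs"
  by (simp add: drop_nth_def)

lemma drop_nth_Cons_Suc [simp]: "drop_nth (Suc j) (x # xs) = x # drop_nth j xs"
  by (simp add: drop_nth_def)

lemma length_drop_nth [simp]: "j < length xs \<Longrightarrow> length (drop_nth j xs) = length xs - 1"
  by (simp add: drop_nth_def)

lemma set_drop_nth: "j < length xs \<Longrightarrow> set xs = insert (xs ! j) (set (drop_nth j xs))"
proof -
  assume j: "j < length xs"
  have "set xs = set (take j xs @ xs ! j # drop (Suc j) xs)" using id_take_nth_drop[OF j] by simp
  then show ?thesis unfolding drop_nth_def by simp
qed

lemma length_drop_nth_Suc: "j < length xs \<Longrightarrow> length xs = Suc (length (drop_nth j xs))"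
  by simp

lemma alternatingD: "alternating F \<Longrightarrow> F (ys @ a # b # zs) = - F (ys @ b # a # zs)"
  unfolding alternating_def by blast

lemma alternating_swap: "alternating F \<Longrightarrow> F (a # b # zs) = - F (b # a # zs)"
  using alternatingD[of F "[]" a b zs] by simp

lemma alternating_repeat: "alternating F \<Longrightarrow> F (a # a # zs) = 0"
  using alternating_swap[of F a a zs] by simp

lemma alternatingI: "(\<And>ys a b zs. F (ys @ a # b # zs) = - F (ys @ b # a # zs)) \<Longrightarrow> alternating F"
  unfolding alternating_def by blast

lemma alternating_Cons:
  assumes "alternating F"
  shows "alternating (\<lambda>ys. F (c # ys))"
proof (rule alternatingI)
  fix ys a b zs
  show "F (c # ys @ a # b # zs) = - F (c # ys @ b # a # zs)"
    using alternatingD[OF assms, of "c # ys" a b zs] by simp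
qed

lemma alternating_ConsI:
  assumes "\<And>a b zs. F (a # b # zs) = - F (b # a # zs)" and "\<And>y. alternating (\<lambda>xs. F (y # xs))"
  shows "alternating F"
proof (rule alternatingI)
  fix ys a b zs
  show "F (ys @ a # b # zs) = - F (ys @ b # a # zs)"
  proof (cases ys)
    case Nil
    then show ?thesis using assms(1)[of a b zs] by simp
  next
    case (Cons y ys')
    then show ?thesis using alternatingD[OF assms(2)[of y], of ys' a b zs] by simp
  qed
qed

lemma alternating_if_short:
  assumes "\<And>xs. F xs \<noteq> 0 \<Longrightarrow> length xs < 2"
  shows "alternating F"
proof -
  have "F (ys @ a # b # zs) = 0" for ys a b zs
    using assms[of "ys @ a # b # zs"] by (cases "F (ys @ a # b # zs) = 0") simp_all
  then show ?thesis by (simp add: alternating_def)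
qed

lemma alternating_diff:
  assumes "alternating F" "alternating G"
  shows "alternating (\<lambda>xs. F xs - G xs)"
proof (rule alternatingI)
  fix ys a b zs
  show "F (ys @ a # b # zs) - G (ys @ a # b # zs) = - (F (ys @ b # a # zs) - G (ys @ b # a # zs))"
    using assms[THEN alternatingD, of ys a b zs] by simp
qed

lemma alternating_mult_left:
  assumes "alternating F"
  shows "alternating (\<lambda>xs. c * F xs)"
proof (rule alternatingI)
  fix ys a b zs
  show "c * F (ys @ a # b # zs) = - (c * F (ys @ b # a # zs))" using alternatingD[OF assms, of ys a b zs] by simp
qed

lemma alternating_mult_right:
  assumes "alternating F"
  shows "alternating (\<lambda>xs. F xs * c)"
proof (rule alternatingI)
  fix ys a b zs
  show "F (ys @ a # b # zs) * c = - (F (ys @ b # a # zs) * c)" using alternatingD[OF assms, of ys a b zs] by simp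
qed

lemma alternating_sum:
  assumes "\<And>a. a \<in> A \<Longrightarrow> alternating (F a)"
  shows "alternating (\<lambda>xs. \<Sum>a\<in>A. F a xs)"
proof (rule alternatingI)
  fix ys a b zs
  show "(\<Sum>c\<in>A. F c (ys @ a # b # zs)) = - (\<Sum>c\<in>A. F c (ys @ b # a # zs))"
    unfolding sum_negf[symmetric] by (rule sum.cong) (auto intro: alternatingD[OF assms])
qed

lemma alternating_if:
  assumes "alternating F"
  shows "alternating (\<lambda>xs. if P then F xs else 0)"
proof (cases P)
  case True
  then show ?thesis using assms by simp
next
  case False
  then show ?thesis by (simp add: alternating_def)
qed

lemma alternating_move_front:
  "alternating F \<Longrightarrow> j < length xs \<Longrightarrow> F (xs ! j # drop_nth j xs) = (-1) ^ j * F xs"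
proof (induction xs arbitrary: j F)
  case Nil
  then show ?case by simp
next
  case (Cons x xs)
  show ?case
  proof (cases j)
    case 0
    then show ?thesis by simp
  next
    case (Suc j')
    have "F (xs ! j' # x # drop_nth j' xs) = - F (x # xs ! j' # drop_nth j' xs)"
      by (rule alternating_swap[OF Cons.prems(1)])
    also have "\<dots> = - ((-1) ^ j' * F (x # xs))"
      using Cons.IH[OF alternating_Cons[OF Cons.prems(1)], of j'] Cons.prems Suc by simp
    finally show ?thesis using Suc by simp
  qed
qed

lemma alternating_not_distinct: "alternating F \<Longrightarrow> \<not> distinct xs \<Longrightarrow> F xs = 0"
proof (induction xs arbitrary: F)
  case Nil
  then show ?case by simp
next
  case (Cons x xs)
  show ?case
  proof (cases "distinct xs")
    case False
    then show ?thesis using Cons.IH[OF alternating_Cons[OF Cons.prems(1)]] by simp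
  next
    case True
    then have "x \<in> set xs" using Cons.prems by simp
    then obtain j where j: "j < length xs" "xs ! j = x" by (metis in_set_conv_nth)
    have "(-1) ^ j * F (x # xs) = F (x # x # drop_nth j xs)"
      using alternating_move_front[OF alternating_Cons[OF Cons.prems(1)] j(1)] j(2) by simp
    also have "\<dots> = 0" by (rule alternating_repeat[OF Cons.prems(1)])
    finally show ?thesis by simp
  qed
qed

lemma insort_eq_take_drop: "\<exists>j \<le> length xs. insort x xs = take j xs @ x # drop j xs"
proof (induction xs)
  case Nil
  then show ?case by simp
next
  case (Cons y xs)
  show ?case
  proof (cases "x \<le> y")
    case True
    then show ?thesis by (intro exI[of _ 0]) simp
  next
    case False
    obtain j where "j \<le> length xs" "insort x xs = take j xs @ x # drop j xs" using Cons by blast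
    then show ?thesis using False by (intro exI[of _ "Suc j"]) simp
  qed
qed

lemma alternating_sort_eq_0:
  fixes xs :: "'a::linorder list"
  assumes "alternating F" "F (sort xs) = 0"
  shows "F xs = 0"
  using assms
proof (induction xs arbitrary: F)
  case Nil
  then show ?case by simp
next
  case (Cons x xs)
  obtain j where j: "j \<le> length (sort xs)" "insort x (sort xs) = take j (sort xs) @ x # drop j (sort xs)"
    using insort_eq_take_drop by blast
  define M where "M = take j (sort xs) @ x # drop j (sort xs)"
  have jM: "j < length M" "M ! j = x" "drop_nth j M = sort xs"
    using j(1) by (simp add: M_def, simp add: M_def nth_append, simp add: M_def drop_nth_def)
  have "F (x # sort xs) = (-1) ^ j * F M"
    using alternating_move_front[OF Cons.prems(1) jM(1)] jM(2,3) by simp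
  also have "F M = 0" using Cons.prems(2) j(2) by (simp add: M_def)
  finally have "F (x # sort xs) = 0" by simp
  then show ?case using Cons.IH[OF alternating_Cons[OF Cons.prems(1)]] by simp
qed

lemma alternating_top_degree_eq_0:
  assumes alt: "alternating F"
    and supp: "\<And>xs. F xs \<noteq> 0 \<Longrightarrow> length xs = n \<and> (\<forall>x\<in>set xs. x < n)"
    and "F [0..<n] = 0"
  shows "F xs = 0"
proof (rule ccontr)
  assume nz: "F xs \<noteq> 0"
  then have "distinct xs" using alternating_not_distinct[OF alt] by blast
  moreover have "set xs \<subseteq> {0..<n}" "length xs = n" using supp[OF nz] by auto
  ultimately have "set xs = {0..<n}" by (simp add: card_subset_eq distinct_card)
  then have "sort xs = [0..<n]"
    using sorted_list_of_set_sort_remdups[of xs] distinct_remdups_id[OF \<open>distinct xs\<close>]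
      sorted_list_of_set_range[of 0 n] by simp
  then show False using alternating_sort_eq_0[OF alt] nz assms(3) by simp
qed

section \<open>Exterior products\<close>

text \<open>For a family \<open>u\<close> of forms, \<open>wedge_sum u\<close> is the form \<open>\<Sum>\<^sub>c e\<^sup>c \<and> u c\<close>, where
  \<open>e\<^sup>c\<close> is the \<open>c\<close>-th coordinate function.\<close>
definition wedge_sum :: "('a \<Rightarrow> 'a list \<Rightarrow> complex) \<Rightarrow> 'a list \<Rightarrow> complex" where
  "wedge_sum u xs = (\<Sum>j<length xs. (-1) ^ j * u (xs ! j) (drop_nth j xs))"

lemma wedge_sum_Cons: "wedge_sum u (a # ys) = u a ys - wedge_sum (\<lambda>c r. u c (a # r)) ys"
  unfolding wedge_sum_def length_Cons sum.lessThan_Suc_shift by (simp add: sum_negf)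

lemma wedge_sum_add: "wedge_sum (\<lambda>c r. u c r + v c r) xs = wedge_sum u xs + wedge_sum v xs"
  by (simp add: wedge_sum_def sum.distrib algebra_simps)

lemma wedge_sum_minus: "wedge_sum (\<lambda>c r. - u c r) xs = - wedge_sum u xs"
  by (simp add: wedge_sum_def sum_negf)

lemma wedge_sum_nonzeroD:
  assumes "wedge_sum u xs \<noteq> 0"
  shows "\<exists>j<length xs. u (xs ! j) (drop_nth j xs) \<noteq> 0"
proof -
  obtain j where "j < length xs" "(-1) ^ j * u (xs ! j) (drop_nth j xs) \<noteq> 0"
    using assms unfolding wedge_sum_def by (auto elim: sum.not_neutral_contains_not_neutral)
  then show ?thesis by auto
qed

lemma alternating_wedge_sum:
  assumes "\<And>c. alternating (u c)"
  shows "alternating (wedge_sum u)"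
proof (rule alternatingI)
  fix ys a b zs
  show "wedge_sum u (ys @ a # b # zs) = - wedge_sum u (ys @ b # a # zs)"
    using assms
  proof (induction ys arbitrary: u)
    case Nil
    have "u c (a # b # r) = - u c (b # a # r)" for c r
      by (rule alternating_swap[OF Nil])
    then have "wedge_sum (\<lambda>c r. u c (a # b # r)) zs = wedge_sum (\<lambda>c r. - u c (b # a # r)) zs"
      by simp
    then have "wedge_sum (\<lambda>c r. u c (a # b # r)) zs = - wedge_sum (\<lambda>c r. u c (b # a # r)) zs"
      by (simp add: wedge_sum_minus)
    then show ?case by (simp add: wedge_sum_Cons)
  next
    case (Cons y ys)
    have "wedge_sum (\<lambda>c r. u c (y # r)) (ys @ a # b # zs) = - wedge_sum (\<lambda>c r. u c (y # r)) (ys @ b # a # zs)"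
      by (rule Cons.IH) (rule alternating_Cons[OF Cons.prems])
    moreover have "u y (ys @ a # b # zs) = - u y (ys @ b # a # zs)"
      by (rule alternatingD[OF Cons.prems])
    ultimately show ?case by (simp add: wedge_sum_Cons)
  qed
qed

lemma wedge_sum_Cons_arg:
  assumes "alternating F"
  shows "wedge_sum (\<lambda>c r. F (c # r)) xs = of_nat (length xs) * F xs"
proof -
  have "(-1) ^ j * F (xs ! j # drop_nth j xs) = F xs" if "j < length xs" for j
    using alternating_move_front[OF assms that] by (simp flip: power_mult_distrib mult.assoc)
  then show ?thesis unfolding wedge_sum_def by simp
qed

lemma wedge_sum_Cons_antisym:
  assumes "\<And>c. alternating (u c)" and "\<And>a b r. u b (a # r) + u a (b # r) = 0"
  shows "wedge_sum u (a # ys) = of_nat (Suc (length ys)) * u a ys"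
proof -
  have "u c (a # r) = - u a (c # r)" for c r
    using assms(2)[of a c r] by (simp add: eq_neg_iff_add_eq_0 add.commute)
  then have "wedge_sum (\<lambda>c r. u c (a # r)) ys = wedge_sum (\<lambda>c r. - u a (c # r)) ys"
    by simp
  also have "\<dots> = - (of_nat (length ys) * u a ys)"
    by (simp add: wedge_sum_minus wedge_sum_Cons_arg[OF assms(1)])
  finally show ?thesis by (simp add: wedge_sum_Cons algebra_simps)
qed

lemma wedge_sum_homotopy:
  assumes "alternating F" "u a = F" "v b = F"
    and "\<And>c r. u c (a # r) + v c (b # r) = - F (c # r)"
  shows "wedge_sum u (a # xs) + wedge_sum v (b # xs) = of_nat (length xs + 2) * F xs"
proof -
  have "wedge_sum (\<lambda>c r. u c (a # r)) xs + wedge_sum (\<lambda>c r. v c (b # r)) xs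
      = wedge_sum (\<lambda>c r. - F (c # r)) xs"
    by (simp add: assms(4) flip: wedge_sum_add)
  also have "\<dots> = - (of_nat (length xs) * F xs)"
    by (simp add: wedge_sum_minus wedge_sum_Cons_arg[OF assms(1)])
  finally show ?thesis using assms(2,3) by (simp add: wedge_sum_Cons algebra_simps)
qed

definition basis_wedge :: "'a \<Rightarrow> ('a list \<Rightarrow> complex) \<Rightarrow> 'a list \<Rightarrow> complex" where
  "basis_wedge i E = wedge_sum (\<lambda>c r. if c = i then E r else 0)"

lemma alternating_basis_wedge: "alternating E \<Longrightarrow> alternating (basis_wedge i E)"
  unfolding basis_wedge_def by (intro alternating_wedge_sum alternating_if)

lemma basis_wedge_nonzeroD:
  assumes "basis_wedge i E xs \<noteq> 0"
  shows "\<exists>j<length xs. xs ! j = i \<and> E (drop_nth j xs) \<noteq> 0"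
proof -
  obtain j where "j < length xs" "(if xs ! j = i then E (drop_nth j xs) else 0) \<noteq> 0"
    using wedge_sum_nonzeroD[OF assms[unfolded basis_wedge_def]] by blast
  then show ?thesis by (auto split: if_splits)
qed

lemma sum_basis_wedge_Cons:
  assumes alt: "alternating E" and supp: "\<And>xs. E xs \<noteq> 0 \<Longrightarrow> length xs = k \<and> (\<forall>x\<in>set xs. x < n)"
  shows "(\<Sum>i<n. basis_wedge i E (i # zs)) = (of_nat n - of_nat k) * E zs"
proof -
  define W where "W i = wedge_sum (\<lambda>c r. if c = i then E (i # r) else 0) zs" for i
  have "W i = (\<Sum>j<length zs. if zs ! j = i then E zs else 0)" for i
    unfolding W_def wedge_sum_def
  proof (rule sum.cong)
    fix j assume "j \<in> {..<length zs}"
    then have "E (zs ! j # drop_nth j zs) = (-1) ^ j * E zs" using alternating_move_front[OF alt] by simp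
    then show "(-1) ^ j * (if zs ! j = i then E (i # drop_nth j zs) else 0) = (if zs ! j = i then E zs else 0)"
      by (auto simp flip: power_mult_distrib mult.assoc)
  qed simp
  then have "(\<Sum>i<n. W i) = (\<Sum>i<n. \<Sum>j<length zs. if zs ! j = i then E zs else 0)"
    by simp
  also have "\<dots> = (\<Sum>j<length zs. \<Sum>i<n. if zs ! j = i then E zs else 0)"
    by (rule sum.swap)
  also have "\<dots> = (\<Sum>j<length zs. if zs ! j < n then E zs else 0)"
    by simp
  also have "\<dots> = of_nat k * E zs"
  proof (cases "E zs = 0")
    case False
    then have "length zs = k" "\<forall>x\<in>set zs. x < n" using supp by auto
    then have "(\<Sum>j<length zs. if zs ! j < n then E zs else 0) = (\<Sum>j<length zs. E zs)"
      by (intro sum.cong) auto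
    then show ?thesis using \<open>length zs = k\<close> by simp
  next
    case True
    have "(if zs ! j < n then E zs else 0) = 0" for j using True by simp
    then show ?thesis using True by simp
  qed
  finally have "(\<Sum>i<n. W i) = of_nat k * E zs" .
  moreover have "basis_wedge i E (i # zs) = E zs - W i" for i
    by (simp add: W_def basis_wedge_def wedge_sum_Cons)
  ultimately show ?thesis by (simp add: sum_subtractf left_diff_distrib)
qed

fun elementary_form :: "nat \<Rightarrow> nat \<Rightarrow> nat list \<Rightarrow> complex" where
  "elementary_form 0 m = (\<lambda>xs. if xs = [] then 1 else 0)"
| "elementary_form (Suc r) m = basis_wedge m (elementary_form r (Suc m))"

lemma alternating_elementary_form: "alternating (elementary_form r m)"
proof (induction r arbitrary: m)
  case 0
  show ?case by (rule alternating_if_short) (simp split: if_splits)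
next
  case (Suc r)
  then show ?case by (simp add: alternating_basis_wedge)
qed

lemma elementary_form_nonzeroD:
  "elementary_form r m xs \<noteq> 0 \<Longrightarrow> length xs = r \<and> (\<forall>x\<in>set xs. m \<le> x \<and> x < m + r)"
proof (induction r arbitrary: m xs)
  case 0
  then show ?case by (simp split: if_splits)
next
  case (Suc r)
  have "basis_wedge m (elementary_form r (Suc m)) xs \<noteq> 0" using Suc.prems by simp
  then obtain j where j: "j < length xs" "xs ! j = m" "elementary_form r (Suc m) (drop_nth j xs) \<noteq> 0"
    by (blast dest: basis_wedge_nonzeroD)
  then show ?case using Suc.IH[OF j(3)] set_drop_nth[OF j(1)] by auto
qed

lemma elementary_form_upt: "elementary_form r m [m..<m + r] = 1"
proof (induction r arbitrary: m)
  case 0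
  then show ?case by simp
next
  case (Suc r)
  have "[Suc m..<Suc m + r] ! j \<noteq> m" if "j < r" for j
    using that nth_upt[of "Suc m" j "Suc m + r"] by linarith
  then have "wedge_sum (\<lambda>c r'. if c = m then elementary_form r (Suc m) (m # r') else 0) [Suc m..<Suc m + r] = 0"
    unfolding wedge_sum_def by (intro sum.neutral) simp
  moreover have "[m..<m + Suc r] = m # [Suc m..<Suc m + r]" by (simp add: upt_conv_Cons)
  ultimately show ?case
    using Suc.IH[of "Suc m"] by (simp del: upt_Suc add: basis_wedge_def wedge_sum_Cons)
qed

definition vol :: "nat \<Rightarrow> nat list \<Rightarrow> complex" where
  "vol n = elementary_form n 0"

lemma alternating_vol: "alternating (vol n)"
  by (simp add: vol_def alternating_elementary_form)

lemma vol_nonzeroD: "vol n xs \<noteq> 0 \<Longrightarrow> length xs = n \<and> (\<forall>x\<in>set xs. x < n)"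
  unfolding vol_def using elementary_form_nonzeroD[of n 0 xs] by auto

lemma vol_upt: "vol n [0..<n] = 1"
  unfolding vol_def using elementary_form_upt[of n 0] by simp

definition arg_action :: "nat \<Rightarrow> (nat \<Rightarrow> nat \<Rightarrow> complex) \<Rightarrow> (nat list \<Rightarrow> complex) \<Rightarrow> nat list \<Rightarrow> complex" where
  "arg_action n M F xs = (\<Sum>j<length xs. \<Sum>b<n. M (xs ! j) b * F (xs[j := b]))"

lemma arg_action_Cons:
  "arg_action n M F (a # ys) = (\<Sum>b<n. M a b * F (b # ys)) + arg_action n M (\<lambda>r. F (a # r)) ys"
  unfolding arg_action_def length_Cons sum.lessThan_Suc_shift by simp

lemma arg_action_minus: "arg_action n M (\<lambda>r. - F r) xs = - arg_action n M F xs"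
  by (simp add: arg_action_def sum_negf)

lemma arg_action_sum: "(\<Sum>i\<in>I. arg_action n M (F i) ys) = arg_action n M (\<lambda>r. \<Sum>i\<in>I. F i r) ys"
  unfolding arg_action_def sum_distrib_left by (subst sum.swap, subst (2) sum.swap) simp

lemma alternating_arg_action:
  assumes "alternating F"
  shows "alternating (arg_action n M F)"
proof (rule alternatingI)
  fix ys a b zs
  show "arg_action n M F (ys @ a # b # zs) = - arg_action n M F (ys @ b # a # zs)"
    using assms
  proof (induction ys arbitrary: F)
    case Nil
    have swap: "F (c # d # r) = - F (d # c # r)" for c d r
      by (rule alternating_swap[OF Nil])
    have "arg_action n M (\<lambda>r. F (a # b # r)) zs = arg_action n M (\<lambda>r. - F (b # a # r)) zs"
      by (simp add: swap[of a b])
    then have tail: "arg_action n M (\<lambda>r. F (a # b # r)) zs = - arg_action n M (\<lambda>r. F (b # a # r)) zs"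
      by (simp add: arg_action_minus)
    have "(\<Sum>c<n. M a c * F (c # b # zs)) = - (\<Sum>c<n. M a c * F (b # c # zs))"
      "(\<Sum>c<n. M b c * F (a # c # zs)) = - (\<Sum>c<n. M b c * F (c # a # zs))"
      unfolding sum_negf[symmetric] by (simp_all add: swap[of _ b] swap[of a])
    with tail show ?case by (simp add: arg_action_Cons)
  next
    case (Cons y ys)
    have "arg_action n M (\<lambda>r. F (y # r)) (ys @ a # b # zs) = - arg_action n M (\<lambda>r. F (y # r)) (ys @ b # a # zs)"
      by (rule Cons.IH) (rule alternating_Cons[OF Cons.prems])
    moreover have "F (c # ys @ a # b # zs) = - F (c # ys @ b # a # zs)" for c
      using alternatingD[OF Cons.prems, of "c # ys" a b zs] by simp
    then have "(\<Sum>c<n. M y c * F (c # ys @ a # b # zs)) = - (\<Sum>c<n. M y c * F (c # ys @ b # a # zs))"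
      by (simp add: sum_negf[symmetric])
    ultimately show ?case by (simp add: arg_action_Cons)
  qed
qed

lemma set_subset_insert_list_update: "j < length xs \<Longrightarrow> set xs \<subseteq> insert (xs ! j) (set (xs[j := b]))"
  by (metis list_update_id list_update_overwrite set_update_subset_insert)

lemma arg_action_nonzeroD:
  assumes "arg_action n M F xs \<noteq> 0"
  shows "\<exists>j<length xs. \<exists>b<n. M (xs ! j) b \<noteq> 0 \<and> F (xs[j := b]) \<noteq> 0"
proof -
  obtain j where j: "j < length xs" "(\<Sum>b<n. M (xs ! j) b * F (xs[j := b])) \<noteq> 0"
    using assms unfolding arg_action_def by (auto elim: sum.not_neutral_contains_not_neutral)
  then obtain b where "b < n" "M (xs ! j) b * F (xs[j := b]) \<noteq> 0"
    by (auto elim: sum.not_neutral_contains_not_neutral)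
  then show ?thesis using j(1) by auto
qed

text \<open>Only the diagonal entries of \<open>M\<close> contribute: replacing an entry of \<open>[0..<n]\<close> by a
  different index creates a repeated argument.\<close>
lemma arg_action_upt:
  assumes alt: "alternating E"
  shows "arg_action n M E [0..<n] = (\<Sum>a<n. M a a) * E [0..<n]"
proof -
  have "(\<Sum>b<n. M j b * E ([0..<n][j := b])) = M j j * E [0..<n]" if j: "j < n" for j
  proof -
    have "M j b * E ([0..<n][j := b]) = 0" if "b < n" "b \<noteq> j" for b
    proof -
      have "\<not> distinct ([0..<n][j := b])"
      proof
        assume d: "distinct ([0..<n][j := b])"
        have "[0..<n][j := b] ! j = [0..<n][j := b] ! b" using j that by simp
        then show False using nth_eq_iff_index_eq[OF d, of j b] j that by simp
      qed
      then show ?thesis by (simp add: alternating_not_distinct[OF alt])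
    qed
    then have "(\<Sum>b<n. M j b * E ([0..<n][j := b])) = (\<Sum>b\<in>{j}. M j b * E ([0..<n][j := b]))"
      using j by (intro sum.mono_neutral_right) auto
    moreover have "[0..<n][j := j] = [0..<n]" using j list_update_id[of "[0..<n]" j] by simp
    ultimately show ?thesis by simp
  qed
  then have "arg_action n M E [0..<n] = (\<Sum>j<n. M j j * E [0..<n])"
    unfolding arg_action_def by (intro sum.cong) simp_all
  then show ?thesis by (simp add: sum_distrib_right)
qed

lemma arg_action_top_degree:
  assumes supp_M: "\<And>a b. M a b \<noteq> 0 \<Longrightarrow> a < n"
    and alt: "alternating E" and supp: "\<And>xs. E xs \<noteq> 0 \<Longrightarrow> length xs = n \<and> (\<forall>x\<in>set xs. x < n)"
  shows "arg_action n M E xs = (\<Sum>a<n. M a a) * E xs"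
proof -
  have "arg_action n M E xs - (\<Sum>a<n. M a a) * E xs = 0"
  proof (rule alternating_top_degree_eq_0[where n = n])
    show "alternating (\<lambda>xs. arg_action n M E xs - (\<Sum>a<n. M a a) * E xs)"
      by (intro alternating_diff alternating_arg_action alternating_mult_left alt)
  next
    fix ys assume "arg_action n M E ys - (\<Sum>a<n. M a a) * E ys \<noteq> 0"
    then consider "arg_action n M E ys \<noteq> 0" | "E ys \<noteq> 0" by fastforce
    then show "length ys = n \<and> (\<forall>x\<in>set ys. x < n)"
    proof cases
      case 1
      then obtain j b where j: "j < length ys" "M (ys ! j) b \<noteq> 0" "E (ys[j := b]) \<noteq> 0"
        using arg_action_nonzeroD by blast
      then have "ys ! j < n" using supp_M by blast
      then show ?thesis using supp[OF j(3)] set_subset_insert_list_update[OF j(1), of b] by auto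
    qed (use supp in blast)
  qed (simp add: arg_action_upt[OF alt])
  then show ?thesis by simp
qed

section \<open>The prolongations of \<open>\<gg>\<ll>(n)\<close> and \<open>\<ss>\<ll>(n)\<close>\<close>

text \<open>\<open>alt_tensors n m\<close> is \<open>U \<otimes> \<Lambda>\<^sup>m(U\<^sup>*)\<close>.\<close>
definition alt_tensors :: "nat \<Rightarrow> nat \<Rightarrow> tens set" where
  "alt_tensors n m = {T. (\<forall>xs i. T xs i \<noteq> 0 \<longrightarrow> length xs = m \<and> (\<forall>x\<in>set xs. x < n) \<and> i < n)
                        \<and> (\<forall>i. alternating (\<lambda>xs. T xs i))}"

definition divergence :: "nat \<Rightarrow> tens \<Rightarrow> nat list \<Rightarrow> complex" where
  "divergence n T ys = (\<Sum>i<n. T (i # ys) i)"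

lemma divergence_add_mult:
  "divergence n (\<lambda>xs i. T xs i + c * S xs i) zs = divergence n T zs + c * divergence n S zs"
  by (simp add: divergence_def sum.distrib sum_distrib_left)

definition div_free_tensors :: "nat \<Rightarrow> nat \<Rightarrow> tens set" where
  "div_free_tensors n m = {T \<in> alt_tensors n m. \<forall>ys. divergence n T ys = 0}"

lemma alt_tensorsI:
  "(\<And>xs i. T xs i \<noteq> 0 \<Longrightarrow> length xs = m \<and> (\<forall>x\<in>set xs. x < n) \<and> i < n)
    \<Longrightarrow> (\<And>i. alternating (\<lambda>xs. T xs i)) \<Longrightarrow> T \<in> alt_tensors n m"
  unfolding alt_tensors_def by blast

lemma alt_tensorsD:
  "T \<in> alt_tensors n m \<Longrightarrow> T xs i \<noteq> 0 \<Longrightarrow> length xs = m \<and> (\<forall>x\<in>set xs. x < n) \<and> i < n"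
  unfolding alt_tensors_def by blast

lemma alt_tensors_alternating: "T \<in> alt_tensors n m \<Longrightarrow> alternating (\<lambda>xs. T xs i)"
  unfolding alt_tensors_def by blast

lemma zero_in_alt_tensors: "(\<lambda>_ _. 0) \<in> alt_tensors n m"
  by (rule alt_tensorsI) (simp_all add: alternatingI)

lemma alt_tensors_sum:
  assumes "\<And>b. b \<in> B \<Longrightarrow> T b \<in> alt_tensors n m"
  shows "(\<lambda>xs i. \<Sum>b\<in>B. T b xs i) \<in> alt_tensors n m"
proof (rule alt_tensorsI)
  fix xs i assume "(\<Sum>b\<in>B. T b xs i) \<noteq> 0"
  then obtain b where "b \<in> B" "T b xs i \<noteq> 0" by (auto elim: sum.not_neutral_contains_not_neutral)
  then show "length xs = m \<and> (\<forall>x\<in>set xs. x < n) \<and> i < n" using alt_tensorsD[OF assms] by auto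
next
  fix i show "alternating (\<lambda>xs. \<Sum>b\<in>B. T b xs i)"
    by (rule alternating_sum, rule alt_tensors_alternating[OF assms])
qed

lemma alt_tensors_mult:
  assumes "T \<in> alt_tensors n m"
  shows "(\<lambda>xs i. c * T xs i) \<in> alt_tensors n m"
proof (rule alt_tensorsI)
  fix xs i assume "c * T xs i \<noteq> 0"
  then show "length xs = m \<and> (\<forall>x\<in>set xs. x < n) \<and> i < n" using alt_tensorsD[OF assms, of xs i] by simp
next
  fix i show "alternating (\<lambda>xs. c * T xs i)"
    by (rule alternating_mult_left[OF alt_tensors_alternating[OF assms]])
qed

lemma alt_tensors_add_mult:
  assumes "T \<in> alt_tensors n m" "S \<in> alt_tensors n m"
  shows "(\<lambda>xs i. T xs i + c * S xs i) \<in> alt_tensors n m"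
  using alt_tensors_sum[of "{True, False}" "\<lambda>b. if b then (\<lambda>xs i. c * S xs i) else T" n m]
    assms alt_tensors_mult[OF assms(2)]
  by (simp add: add.commute)

lemma alt_tensors_Cons:
  assumes "T \<in> alt_tensors n (Suc m)"
  shows "(\<lambda>xs. T (l # xs)) \<in> alt_tensors n m"
proof (rule alt_tensorsI)
  fix xs i assume "T (l # xs) i \<noteq> 0"
  then show "length xs = m \<and> (\<forall>x\<in>set xs. x < n) \<and> i < n" using alt_tensorsD[OF assms] by fastforce
next
  fix i show "alternating (\<lambda>xs. T (l # xs) i)" by (rule alternating_Cons[OF alt_tensors_alternating[OF assms]])
qed

lemma divergence_Cons:
  assumes "T \<in> alt_tensors n (Suc (Suc m))"
  shows "divergence n (\<lambda>xs. T (l # xs)) r = - divergence n T (l # r)"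
  unfolding divergence_def sum_negf[symmetric]
  by (intro sum.cong refl alternating_swap[OF alt_tensors_alternating[OF assms]])

lemma divergence_eq_0_if_not_less:
  assumes "T \<in> alt_tensors n m" "\<not> l < n"
  shows "divergence n T (l # r) = 0"
proof -
  have "T (i # l # r) i = 0" for i using alt_tensorsD[OF assms(1), of "i # l # r" i] assms(2) by auto
  then show ?thesis by (simp add: divergence_def)
qed

lemma divergence_eq_0_if_length:
  assumes "T \<in> alt_tensors n m" "Suc (length ys) \<noteq> m"
  shows "divergence n T ys = 0"
proof -
  have "T (i # ys) i = 0" for i using alt_tensorsD[OF assms(1), of "i # ys" i] assms(2) by auto
  then show ?thesis by (simp add: divergence_def)
qed

lemma div_free_tensors_0: "div_free_tensors n 0 = alt_tensors n 0"
  unfolding div_free_tensors_def using divergence_eq_0_if_length[of _ n 0] by auto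

lemma prolong_0: "prolong n G0 0 = alt_tensors n 0"
proof (intro set_eqI iffI)
  fix T assume "T \<in> prolong n G0 0"
  then have h: "T xs i \<noteq> 0 \<Longrightarrow> xs = [] \<and> i < n" for xs i by simp
  show "T \<in> alt_tensors n 0"
  proof (rule alt_tensorsI)
    fix i show "alternating (\<lambda>xs. T xs i)" by (rule alternating_if_short) (use h in force)
  qed (use h in force)
qed (auto dest: alt_tensorsD)

lemma gl_alg_eq_alt_tensors: "gl_alg n = alt_tensors n 1"
proof (intro set_eqI iffI)
  fix T assume "T \<in> gl_alg n"
  then have h: "T xs i \<noteq> 0 \<Longrightarrow> (\<exists>a. xs = [a] \<and> a < n) \<and> i < n" for xs i unfolding gl_alg_def by blast
  show "T \<in> alt_tensors n 1"
  proof (rule alt_tensorsI)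
    fix i show "alternating (\<lambda>xs. T xs i)" by (rule alternating_if_short) (use h in force)
  qed (use h in force)
next
  fix T assume "T \<in> alt_tensors n 1"
  then show "T \<in> gl_alg n" unfolding gl_alg_def by (force dest: alt_tensorsD simp: length_Suc_conv)
qed

lemma sl_alg_eq_div_free_tensors: "sl_alg n = div_free_tensors n 1"
proof -
  have "(\<forall>ys. divergence n T ys = 0) \<longleftrightarrow> (\<Sum>a<n. T [a] a) = 0" if T: "T \<in> alt_tensors n 1" for T
  proof
    assume "\<forall>ys. divergence n T ys = 0"
    then show "(\<Sum>a<n. T [a] a) = 0" by (simp add: divergence_def)
  next
    assume tr: "(\<Sum>a<n. T [a] a) = 0"
    show "\<forall>ys. divergence n T ys = 0"
    proof
      fix ys show "divergence n T ys = 0"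
        using tr divergence_eq_0_if_length[OF T, of ys] by (cases ys) (simp_all add: divergence_def)
    qed
  qed
  then show ?thesis unfolding sl_alg_def div_free_tensors_def gl_alg_eq_alt_tensors by auto
qed

definition prolong_step :: "nat \<Rightarrow> tens set \<Rightarrow> tens set" where
  "prolong_step n P = {T. (\<forall>xs i. T xs i \<noteq> 0 \<longrightarrow> xs \<noteq> [] \<and> hd xs < n)
       \<and> (\<forall>l<n. (\<lambda>xs. T (l # xs)) \<in> P) \<and> (\<forall>a b xs i. T (a # b # xs) i = - T (b # a # xs) i)}"

lemma prolong_Suc_Suc: "prolong n G0 (Suc (Suc j)) = prolong_step n (prolong n G0 (Suc j))"
  by (simp add: prolong_step_def)

lemma prolong_step_Collect:
  "prolong_step n {T \<in> P. Q T} = {T \<in> prolong_step n P. \<forall>l<n. Q (\<lambda>xs. T (l # xs))}"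
  unfolding prolong_step_def by blast

lemma prolong_step_subset_alt_tensors: "prolong_step n (alt_tensors n m) \<subseteq> alt_tensors n (Suc m)"
proof
  fix T assume "T \<in> prolong_step n (alt_tensors n m)"
  then have supp: "\<And>xs i. T xs i \<noteq> 0 \<Longrightarrow> xs \<noteq> [] \<and> hd xs < n"
    and slice: "\<And>l. l < n \<Longrightarrow> (\<lambda>xs. T (l # xs)) \<in> alt_tensors n m"
    and swap: "\<And>a b xs i. T (a # b # xs) i = - T (b # a # xs) i"
    unfolding prolong_step_def by blast+
  show "T \<in> alt_tensors n (Suc m)"
  proof (rule alt_tensorsI)
    fix xs i assume nz: "T xs i \<noteq> 0"
    then obtain l r where xs: "xs = l # r" and l: "l < n" using supp[OF nz] by (cases xs) auto
    have "T (l # r) i \<noteq> 0" using nz xs by simp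
    then have "length r = m \<and> (\<forall>x\<in>set r. x < n) \<and> i < n" by (rule alt_tensorsD[OF slice[OF l]])
    then show "length xs = Suc m \<and> (\<forall>x\<in>set xs. x < n) \<and> i < n" using xs l by simp
  next
    fix i
    show "alternating (\<lambda>xs. T xs i)"
    proof (rule alternating_ConsI)
      show "T (a # b # zs) i = - T (b # a # zs) i" for a b zs by (rule swap)
      fix y
      show "alternating (\<lambda>xs. T (y # xs) i)"
      proof (cases "y < n")
        case True
        then show ?thesis by (rule alt_tensors_alternating[OF slice])
      next
        case False
        then have "T (y # xs) i = 0" for xs using supp[of "y # xs" i] by fastforce
        then show ?thesis by (simp add: alternating_def)
      qed
    qed
  qed
qed

lemma alt_tensors_subset_prolong_step: "alt_tensors n (Suc m) \<subseteq> prolong_step n (alt_tensors n m)"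
proof
  fix T assume T: "T \<in> alt_tensors n (Suc m)"
  have "xs \<noteq> [] \<and> hd xs < n" if "T xs i \<noteq> 0" for xs i
    using alt_tensorsD[OF T that] by (cases xs) auto
  moreover have "T (a # b # xs) i = - T (b # a # xs) i" for a b xs i
    by (rule alternating_swap[OF alt_tensors_alternating[OF T]])
  ultimately show "T \<in> prolong_step n (alt_tensors n m)"
    unfolding prolong_step_def using alt_tensors_Cons[OF T] by blast
qed

lemma prolong_step_alt_tensors: "prolong_step n (alt_tensors n m) = alt_tensors n (Suc m)"
  using prolong_step_subset_alt_tensors alt_tensors_subset_prolong_step by blast

text \<open>By antisymmetry in the first two arguments, the divergence of a slice of \<open>T\<close> is minus
  a value of the divergence of \<open>T\<close>.\<close>
lemma prolong_step_div_free_tensors: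
  assumes "m \<ge> 1"
  shows "prolong_step n (div_free_tensors n m) = div_free_tensors n (Suc m)"
proof (rule set_eqI)
  fix T
  have "T \<in> prolong_step n (div_free_tensors n m) \<longleftrightarrow>
      T \<in> alt_tensors n (Suc m) \<and> (\<forall>l<n. \<forall>r. divergence n (\<lambda>xs. T (l # xs)) r = 0)"
    by (simp only: div_free_tensors_def[of n m] prolong_step_Collect prolong_step_alt_tensors mem_Collect_eq)
  also have "\<dots> \<longleftrightarrow> T \<in> alt_tensors n (Suc m) \<and> (\<forall>ys. divergence n T ys = 0)"
  proof (rule conj_cong[OF refl])
    assume T: "T \<in> alt_tensors n (Suc m)"
    have slice: "divergence n (\<lambda>xs. T (l # xs)) r = - divergence n T (l # r)" for l r
      using divergence_Cons[of T n "m - 1"] T assms by simp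
    have "divergence n T ys = 0" if h: "\<forall>l<n. \<forall>r. divergence n T (l # r) = 0" for ys
    proof (cases ys)
      case Nil
      then show ?thesis using divergence_eq_0_if_length[OF T, of ys] assms by simp
    next
      case (Cons l r)
      then show ?thesis using h divergence_eq_0_if_not_less[OF T, of l r] by (cases "l < n") auto
    qed
    then show "(\<forall>l<n. \<forall>r. divergence n (\<lambda>xs. T (l # xs)) r = 0) \<longleftrightarrow> (\<forall>ys. divergence n T ys = 0)"
      unfolding slice by auto
  qed
  finally show "T \<in> prolong_step n (div_free_tensors n m) \<longleftrightarrow> T \<in> div_free_tensors n (Suc m)"
    by (simp only: div_free_tensors_def mem_Collect_eq)
qed

lemma prolong_gl_alg: "prolong n (gl_alg n) k = alt_tensors n k"
proof (cases k)
  case 0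
  then show ?thesis by (simp only: prolong_0)
next
  case (Suc j)
  have "prolong n (gl_alg n) (Suc j) = alt_tensors n (Suc j)"
  proof (induction j)
    case 0
    then show ?case by (simp add: gl_alg_eq_alt_tensors)
  next
    case (Suc j)
    then show ?case by (simp only: prolong_Suc_Suc prolong_step_alt_tensors)
  qed
  then show ?thesis using Suc by simp
qed

lemma prolong_sl_alg: "prolong n (sl_alg n) k = div_free_tensors n k"
proof (cases k)
  case 0
  then show ?thesis by (simp only: prolong_0 div_free_tensors_0)
next
  case (Suc j)
  have "prolong n (sl_alg n) (Suc j) = div_free_tensors n (Suc j)"
  proof (induction j)
    case 0
    then show ?case by (simp add: sl_alg_eq_div_free_tensors)
  next
    case (Suc j)
    then show ?case by (simp only: prolong_Suc_Suc prolong_step_div_free_tensors[of "Suc j"])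
  qed
  then show ?thesis using Suc by simp
qed

lemma sl_alg_subset_gl_alg: "sl_alg n \<subseteq> gl_alg n"
  unfolding sl_alg_def by blast

lemma gl_alg_entry_nonzeroD: "X \<in> gl_alg n \<Longrightarrow> X [a] b \<noteq> 0 \<Longrightarrow> a < n \<and> b < n"
  unfolding gl_alg_def by fastforce

lemma sl_alg_trace: "X \<in> sl_alg n \<Longrightarrow> (\<Sum>a<n. X [a] a) = 0"
  unfolding sl_alg_def by blast

lemma tens_neq_zero_iff: "(f :: tens) \<noteq> (\<lambda>_ _. 0) \<longleftrightarrow> (\<exists>xs i. f xs i \<noteq> 0)"
  by (auto simp: fun_eq_iff)

lemma cochainsI:
  assumes "\<And>ys xs i. f ys xs i \<noteq> 0 \<Longrightarrow> length ys = s \<and> (\<forall>y\<in>set ys. y < n)"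
    and "s \<le> k + 1" and "\<And>ys. f ys \<in> prolong n G0 (k + 1 - s)"
    and "\<And>ys a b zs. f (ys @ a # b # zs) = f (ys @ b # a # zs)"
  shows "f \<in> cochains n G0 k s"
proof -
  have "\<forall>ys. (\<exists>xs i. f ys xs i \<noteq> 0) \<longrightarrow> length ys = s \<and> (\<forall>y\<in>set ys. y < n)"
    using assms(1) by blast
  moreover have "\<forall>ys. f ys \<in> (if s \<le> k + 1 then prolong n G0 (k + 1 - s) else {\<lambda>_ _. 0})"
    using assms(2,3) by simp
  moreover have "\<forall>ys zs a b. f (ys @ a # b # zs) = f (ys @ b # a # zs)"
    using assms(4) by blast
  ultimately show ?thesis unfolding cochains_def tens_neq_zero_iff by blast
qed

lemma cochains_supportD:
  "f \<in> cochains n G0 k s \<Longrightarrow> f ys xs i \<noteq> 0 \<Longrightarrow> length ys = s \<and> (\<forall>y\<in>set ys. y < n)"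
  unfolding cochains_def tens_neq_zero_iff by blast

lemma cochains_eq_0: "f \<in> cochains n G0 k s \<Longrightarrow> length ys \<noteq> s \<Longrightarrow> f ys = (\<lambda>_ _. 0)"
  using cochains_supportD by (intro ext) blast

lemma cochains_valueD:
  assumes "f \<in> cochains n G0 k s" "s \<le> k + 1"
  shows "f ys \<in> prolong n G0 (k + 1 - s)"
proof -
  have "f ys \<in> (if s \<le> k + 1 then prolong n G0 (k + 1 - s) else {\<lambda>_ _. 0})"
    using assms(1) unfolding cochains_def by blast
  then show ?thesis using assms(2) by simp
qed

lemma cochains_symD: "f \<in> cochains n G0 k s \<Longrightarrow> f (ys @ a # b # zs) = f (ys @ b # a # zs)"
  unfolding cochains_def by blast

lemma cochains_1I:
  assumes "\<And>ys xs i. f ys xs i \<noteq> 0 \<Longrightarrow> length ys = 1 \<and> (\<forall>y\<in>set ys. y < n)"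
    and "\<And>ys. f ys \<in> prolong n G0 k"
  shows "f \<in> cochains n G0 k 1"
proof (rule cochainsI[OF assms(1)])
  fix ys a b zs
  have "f ws = (\<lambda>_ _. 0)" if "length ws \<noteq> 1" for ws
    using assms(1) that by (intro ext) blast
  then show "f (ys @ a # b # zs) = f (ys @ b # a # zs)" by simp
qed (use assms(2) in simp_all)

lemma cochains_1_valueD: "f \<in> cochains n G0 k 1 \<Longrightarrow> f ys \<in> prolong n G0 k"
  using cochains_valueD[of f n G0 k 1] by simp

lemma cochains_2I:
  assumes "k > 0"
    and "\<And>ys xs i. f ys xs i \<noteq> 0 \<Longrightarrow> length ys = 2 \<and> (\<forall>y\<in>set ys. y < n)"
    and "\<And>ys. f ys \<in> prolong n G0 (k - 1)"
    and "\<And>a b. f [a, b] = f [b, a]"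
  shows "f \<in> cochains n G0 k 2"
proof (rule cochainsI[OF assms(2)])
  fix ys a b zs
  have zero: "f ws = (\<lambda>_ _. 0)" if "length ws \<noteq> 2" for ws
    using assms(2) that by (intro ext) blast
  show "f (ys @ a # b # zs) = f (ys @ b # a # zs)"
  proof (cases "ys = [] \<and> zs = []")
    case True
    then show ?thesis using assms(4) by simp
  next
    case False
    then show ?thesis using zero[of "ys @ a # b # zs"] zero[of "ys @ b # a # zs"] by auto
  qed
qed (use assms(1,3) in simp_all)

lemma cochains_2_valueD: "f \<in> cochains n G0 k 2 \<Longrightarrow> k > 0 \<Longrightarrow> f ys \<in> prolong n G0 (k - 1)"
  using cochains_valueD[of f n G0 k 2] by simp

lemma cochains_2_symD: "f \<in> cochains n G0 k 2 \<Longrightarrow> f [a, b] = f [b, a]"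
  using cochains_symD[of f n G0 k 2 "[]" a b "[]"] by simp

lemma cochains_sl_alg_iff:
  "f \<in> cochains n (sl_alg n) k s \<longleftrightarrow> f \<in> cochains n (gl_alg n) k s \<and> (\<forall>ys zs. divergence n (f ys) zs = 0)"
proof -
  have "f ys \<in> (if s \<le> k + 1 then div_free_tensors n (k + 1 - s) else {\<lambda>_ _. 0}) \<longleftrightarrow>
      f ys \<in> (if s \<le> k + 1 then alt_tensors n (k + 1 - s) else {\<lambda>_ _. 0}) \<and> (\<forall>zs. divergence n (f ys) zs = 0)"
    for ys
    by (auto simp: div_free_tensors_def divergence_def)
  then show ?thesis unfolding cochains_def prolong_sl_alg prolong_gl_alg mem_Collect_eq by blast
qed

lemma cochains_gl_add_mult:
  assumes g: "g \<in> cochains n (gl_alg n) k s" and h: "h \<in> cochains n (gl_alg n) k s" and s: "s \<le> k + 1"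
  shows "(\<lambda>ys xs i. g ys xs i + c * h ys xs i) \<in> cochains n (gl_alg n) k s"
proof (rule cochainsI[OF _ s])
  fix ys xs i assume "g ys xs i + c * h ys xs i \<noteq> 0"
  then have "g ys xs i \<noteq> 0 \<or> h ys xs i \<noteq> 0" by auto
  then show "length ys = s \<and> (\<forall>y\<in>set ys. y < n)"
    using cochains_supportD[OF g] cochains_supportD[OF h] by blast
next
  fix ys
  show "(\<lambda>xs i. g ys xs i + c * h ys xs i) \<in> prolong n (gl_alg n) (k + 1 - s)"
    using cochains_valueD[OF g s, of ys] cochains_valueD[OF h s, of ys]
    by (simp add: prolong_gl_alg alt_tensors_add_mult)
next
  fix ys a b zs
  show "(\<lambda>xs i. g (ys @ a # b # zs) xs i + c * h (ys @ a # b # zs) xs i)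
      = (\<lambda>xs i. g (ys @ b # a # zs) xs i + c * h (ys @ b # a # zs) xs i)"
    using cochains_symD[OF g, of ys a b zs] cochains_symD[OF h, of ys a b zs] by simp
qed

lemma coboundaries_2I: "h \<in> cochains n G0 k 1 \<Longrightarrow> spencer_d h = f \<Longrightarrow> f \<in> coboundaries n G0 k 2"
  unfolding coboundaries_def by (auto simp: numeral_2_eq_2)

lemma spencer_d_pair: "spencer_d g [a, b] xs i = g [b] (a # xs) i + g [a] (b # xs) i"
  unfolding spencer_d_def by (simp add: numeral_2_eq_2 lessThan_Suc)

lemma spencer_d_triple:
  "spencer_d g [a, b, c] xs i = g [b, c] (a # xs) i + g [a, c] (b # xs) i + g [a, b] (c # xs) i"
  unfolding spencer_d_def by (simp add: numeral_3_eq_3 numeral_2_eq_2 lessThan_Suc)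

lemma spencer_d_eq_0_if_length:
  assumes "\<And>ys xs i. g ys xs i \<noteq> 0 \<Longrightarrow> length ys = m" and "length ys \<noteq> Suc m"
  shows "spencer_d g ys xs i = 0"
  unfolding spencer_d_def using assms by (intro sum.neutral) force

lemma spencer_d_add_mult:
  "spencer_d (\<lambda>ys xs i. g ys xs i + c * h ys xs i) ys xs i = spencer_d g ys xs i + c * spencer_d h ys xs i"
  unfolding spencer_d_def by (simp add: sum.distrib sum_distrib_left)

lemma spencer_d_nonzeroD:
  assumes "g \<in> cochains n G0 k s" "spencer_d g ys xs i \<noteq> 0"
  shows "length ys = Suc s"
proof (rule ccontr)
  assume "length ys \<noteq> Suc s"
  then have "spencer_d g ys xs i = 0"
    by (rule spencer_d_eq_0_if_length[rotated]) (use cochains_supportD[OF assms(1)] in blast)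
  then show False using assms(2) by simp
qed

lemma length_eq_2_iff: "length ys = 2 \<longleftrightarrow> (\<exists>a b. ys = [a, b])"
  by (auto simp: numeral_2_eq_2 length_Suc_conv)

lemma length_eq_3_iff: "length ys = 3 \<longleftrightarrow> (\<exists>a b c. ys = [a, b, c])"
  by (auto simp: numeral_3_eq_3 length_Suc_conv)

lemma spencer_d_cochains_1:
  assumes "g \<in> cochains n (gl_alg n) k 1" "k > 0"
  shows "spencer_d g \<in> cochains n (gl_alg n) k 2"
proof -
  have gP: "g ys \<in> alt_tensors n k" for ys using cochains_1_valueD[OF assms(1)] by (simp add: prolong_gl_alg)
  have g1: "length ys = 1 \<and> (\<forall>y\<in>set ys. y < n)" if "g ys xs i \<noteq> 0" for ys xs i
    using cochains_supportD[OF assms(1) that] .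
  have k: "k = Suc (k - 1)" using assms(2) by simp
  show ?thesis
  proof (rule cochains_2I[OF assms(2)])
    fix ys xs i assume nz: "spencer_d g ys xs i \<noteq> 0"
    then have "length ys = 2" using spencer_d_nonzeroD[OF assms(1)] by simp
    then obtain a b where ys: "ys = [a, b]" by (auto simp: length_eq_2_iff)
    then have "g [b] (a # xs) i \<noteq> 0 \<or> g [a] (b # xs) i \<noteq> 0" using nz by (auto simp: spencer_d_pair)
    then have "a < n \<and> b < n" using g1 alt_tensorsD[OF gP] by fastforce
    then show "length ys = 2 \<and> (\<forall>y\<in>set ys. y < n)" using ys by simp
  next
    fix ys
    show "spencer_d g ys \<in> prolong n (gl_alg n) (k - 1)"
    proof (cases "length ys = 2")
      case True
      then obtain a b where ys: "ys = [a, b]" by (auto simp: length_eq_2_iff)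
      have "spencer_d g [a, b] = (\<lambda>xs i. g [b] (a # xs) i + 1 * g [a] (b # xs) i)"
        by (intro ext) (simp add: spencer_d_pair)
      moreover have "(\<lambda>xs i. g [b] (a # xs) i + 1 * g [a] (b # xs) i) \<in> alt_tensors n (k - 1)"
        using gP k by (intro alt_tensors_add_mult alt_tensors_Cons) simp_all
      ultimately show ?thesis using ys by (simp add: prolong_gl_alg)
    next
      case False
      then have "spencer_d g ys = (\<lambda>_ _. 0)"
        using spencer_d_nonzeroD[OF assms(1), of ys] by (intro ext) (auto simp: numeral_2_eq_2)
      then show ?thesis by (simp add: prolong_gl_alg zero_in_alt_tensors)
    qed
  next
    fix a b show "spencer_d g [a, b] = spencer_d g [b, a]"
      by (intro ext) (simp add: spencer_d_pair add.commute)
  qed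
qed

lemma spencer_d_spencer_d_cochains_1:
  assumes "g \<in> cochains n (gl_alg n) k 1"
  shows "spencer_d (spencer_d g) = (\<lambda>_ _ _. 0)"
proof (intro ext)
  fix ys xs i
  have d2: "length ys = 2" if "spencer_d g ys xs i \<noteq> 0" for ys xs i
    using spencer_d_nonzeroD[OF assms that] by simp
  show "spencer_d (spencer_d g) ys xs i = 0"
  proof (cases "length ys = 3")
    case True
    then obtain a b c where ys: "ys = [a, b, c]" by (auto simp: length_eq_3_iff)
    have swap: "g [x] (y # z # xs) i = - g [x] (z # y # xs) i" for x y z
      using cochains_1_valueD[OF assms, of "[x]"]
      by (intro alternating_swap alt_tensors_alternating) (simp add: prolong_gl_alg)
    show ?thesis unfolding ys spencer_d_triple spencer_d_pair
      using swap[of c b a] swap[of b c a] swap[of a c b] by simp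
  next
    case False
    then show ?thesis using spencer_d_eq_0_if_length[of "spencer_d g" 2] d2 by (simp add: numeral_3_eq_3)
  qed
qed

section \<open>Vanishing of \<open>H\<^sup>k\<^sup>,\<^sup>2\<close> for \<open>\<gg>\<ll>(n)\<close>\<close>

definition spencer_homotopy :: "nat \<Rightarrow> cochain \<Rightarrow> cochain" where
  "spencer_homotopy k f = (\<lambda>ys xs i. if length ys = 1
      then inverse (of_nat (k + 1)) * wedge_sum (\<lambda>c r. f [hd ys, c] r i) xs else 0)"

lemma spencer_homotopy_cochains:
  assumes k: "k > 0" and f: "f \<in> cochains n G0 k 2" and P: "\<And>ys. f ys \<in> alt_tensors n (k - 1)"
  shows "spencer_homotopy k f \<in> cochains n (gl_alg n) k 1"
proof -
  have supp: "length xs = k \<and> (\<forall>x\<in>set xs. x < n) \<and> i < n \<and> a < n"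
    if nz: "wedge_sum (\<lambda>c r. f [a, c] r i) xs \<noteq> 0" for a xs i
  proof -
    obtain j where j: "j < length xs" "f [a, xs ! j] (drop_nth j xs) i \<noteq> 0"
      using wedge_sum_nonzeroD[OF nz] by blast
    have "length (drop_nth j xs) = k - 1 \<and> (\<forall>x\<in>set (drop_nth j xs). x < n) \<and> i < n"
      using alt_tensorsD[OF P j(2)] .
    moreover have "a < n \<and> xs ! j < n" using cochains_supportD[OF f j(2)] by simp
    ultimately show ?thesis using length_drop_nth_Suc[OF j(1)] set_drop_nth[OF j(1)] k by auto
  qed
  have "spencer_homotopy k f [a] \<in> alt_tensors n k" for a
  proof (rule alt_tensorsI)
    fix xs i assume "spencer_homotopy k f [a] xs i \<noteq> 0"
    then have "wedge_sum (\<lambda>c r. f [a, c] r i) xs \<noteq> 0" by (simp add: spencer_homotopy_def)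
    then show "length xs = k \<and> (\<forall>x\<in>set xs. x < n) \<and> i < n" using supp by blast
  next
    fix i
    have "alternating (wedge_sum (\<lambda>c r. f [a, c] r i))"
      by (rule alternating_wedge_sum, rule alt_tensors_alternating[OF P])
    then show "alternating (\<lambda>xs. spencer_homotopy k f [a] xs i)"
      unfolding spencer_homotopy_def by (simp add: alternating_mult_left)
  qed
  moreover have "spencer_homotopy k f ys = (\<lambda>_ _. 0)" if "length ys \<noteq> 1" for ys
    using that by (simp add: spencer_homotopy_def)
  ultimately have "spencer_homotopy k f ys \<in> alt_tensors n k" for ys
    by (cases "length ys = 1") (auto simp: length_Suc_conv zero_in_alt_tensors)
  moreover have "length ys = 1 \<and> (\<forall>y\<in>set ys. y < n)" if "spencer_homotopy k f ys xs i \<noteq> 0" for ys xs i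
    using that supp by (auto simp: spencer_homotopy_def length_Suc_conv split: if_splits)
  ultimately show ?thesis by (intro cochains_1I) (simp_all add: prolong_gl_alg)
qed

lemma spencer_d_spencer_homotopy_pair:
  assumes k: "k > 0" and f: "f \<in> cochains n G0 k 2" and P: "\<And>ys. f ys \<in> alt_tensors n (k - 1)"
    and closed: "spencer_d f = (\<lambda>_ _ _. 0)"
  shows "spencer_d (spencer_homotopy k f) [a, b] xs i = f [a, b] xs i"
proof -
  define F where "F r = f [a, b] r i" for r
  have "wedge_sum (\<lambda>c r. f [b, c] r i) (a # xs) + wedge_sum (\<lambda>c r. f [a, c] r i) (b # xs)
      = of_nat (length xs + 2) * F xs"
  proof (rule wedge_sum_homotopy)
    show "alternating F" unfolding F_def by (rule alt_tensors_alternating[OF P])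
    show "(\<lambda>r. f [b, a] r i) = F" using cochains_2_symD[OF f, of b a] by (simp add: F_def fun_eq_iff)
    show "(\<lambda>r. f [a, b] r i) = F" by (simp add: F_def fun_eq_iff)
    fix c r
    have "spencer_d f [a, b, c] r i = 0" using closed by simp
    then show "f [b, c] (a # r) i + f [a, c] (b # r) i = - F (c # r)"
      unfolding spencer_d_triple F_def by (simp add: eq_neg_iff_add_eq_0)
  qed
  also have "of_nat (length xs + 2) * F xs = of_nat (k + 1) * F xs"
    using alt_tensorsD[OF P, of "[a, b]" xs i] k by (cases "F xs = 0") (auto simp: F_def)
  finally have sum: "wedge_sum (\<lambda>c r. f [b, c] r i) (a # xs) + wedge_sum (\<lambda>c r. f [a, c] r i) (b # xs)
      = of_nat (k + 1) * F xs" .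
  have "spencer_d (spencer_homotopy k f) [a, b] xs i = inverse (of_nat (k + 1)) * (of_nat (k + 1) * F xs)"
    unfolding spencer_d_pair sum[symmetric] by (simp add: spencer_homotopy_def distrib_left)
  also have "\<dots> = F xs"
  proof -
    have nz: "(of_nat (k + 1) :: complex) \<noteq> 0" by (simp only: of_nat_eq_0_iff)
    show ?thesis by (simp only: mult.assoc[symmetric] left_inverse[OF nz] mult_1_left)
  qed
  finally show ?thesis by (simp add: F_def)
qed

lemma spencer_d_spencer_homotopy:
  assumes k: "k > 0" and f: "f \<in> cochains n G0 k 2" and P: "\<And>ys. f ys \<in> alt_tensors n (k - 1)"
    and closed: "spencer_d f = (\<lambda>_ _ _. 0)"
  shows "spencer_d (spencer_homotopy k f) = f"
proof (intro ext)
  fix ys xs i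
  show "spencer_d (spencer_homotopy k f) ys xs i = f ys xs i"
  proof (cases "length ys = 2")
    case True
    then obtain a b where "ys = [a, b]" by (auto simp: length_eq_2_iff)
    then show ?thesis using spencer_d_spencer_homotopy_pair[OF assms] by simp
  next
    case False
    have "spencer_d (spencer_homotopy k f) ys xs i = 0"
      using False by (intro spencer_d_eq_0_if_length[of _ 1])
        (auto simp: spencer_homotopy_def numeral_2_eq_2 split: if_splits)
    moreover have "f ys xs i = 0" using cochains_supportD[OF f] False by blast
    ultimately show ?thesis by simp
  qed
qed

lemma cochains_2_alt_tensors:
  assumes "f \<in> cochains n G0 k 2" "k > 0" "G0 \<in> {gl_alg n, sl_alg n}"
  shows "f ys \<in> alt_tensors n (k - 1)"
  using cochains_2_valueD[OF assms(1,2)] assms(3)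
  by (auto simp: prolong_gl_alg prolong_sl_alg div_free_tensors_def)

lemma spencer_H_zero_gl_alg:
  assumes "k > 0"
  shows "spencer_H_zero n (gl_alg n) k 2"
  unfolding spencer_H_zero_def
proof
  fix f assume "f \<in> cocycles n (gl_alg n) k 2"
  then have f: "f \<in> cochains n (gl_alg n) k 2" and closed: "spencer_d f = (\<lambda>_ _ _. 0)"
    unfolding cocycles_def by auto
  have P: "f ys \<in> alt_tensors n (k - 1)" for ys by (rule cochains_2_alt_tensors[OF f assms]) simp
  show "f \<in> coboundaries n (gl_alg n) k 2"
    using spencer_homotopy_cochains[OF assms f P] spencer_d_spencer_homotopy[OF assms f P closed]
    by (intro coboundaries_2I)
qed

lemma cochains_gl_1_alt_tensors: "g \<in> cochains n (gl_alg n) k 1 \<Longrightarrow> g ys \<in> alt_tensors n k"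
  using cochains_1_valueD by (metis prolong_gl_alg)

lemma divergence_cochains_gl_1_nonzeroD:
  assumes g: "g \<in> cochains n (gl_alg n) k 1" and nz: "divergence n (g [a]) ys \<noteq> 0"
  shows "Suc (length ys) = k \<and> (\<forall>x\<in>set ys. x < n) \<and> a < n"
proof -
  obtain i where "g [a] (i # ys) i \<noteq> 0"
    using nz unfolding divergence_def by (auto elim: sum.not_neutral_contains_not_neutral)
  then show ?thesis
    using alt_tensorsD[OF cochains_gl_1_alt_tensors[OF g]] cochains_supportD[OF g] by fastforce
qed

lemma divergence_spencer_d_pair:
  assumes g: "g \<in> cochains n (gl_alg n) k 1"
  shows "divergence n (spencer_d g [a, b]) ys = - (divergence n (g [b]) (a # ys) + divergence n (g [a]) (b # ys))"
proof -
  have swap: "g [c] (d # i # ys) i = - g [c] (i # d # ys) i" for c d i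
    by (rule alternating_swap[OF alt_tensors_alternating[OF cochains_gl_1_alt_tensors[OF g]]])
  have "divergence n (spencer_d g [a, b]) ys = (\<Sum>i<n. g [b] (a # i # ys) i + g [a] (b # i # ys) i)"
    by (simp add: divergence_def spencer_d_pair)
  also have "\<dots> = (\<Sum>i<n. - g [b] (i # a # ys) i - g [a] (i # b # ys) i)"
    using swap[of b a] swap[of a b] by simp
  finally show ?thesis by (simp add: divergence_def sum_subtractf sum_negf)
qed

text \<open>If the divergences of the values of \<open>g\<close> are antisymmetric in all their arguments, they are
  the contractions of this \<open>k\<close>-form.\<close>
definition div_form :: "nat \<Rightarrow> nat \<Rightarrow> cochain \<Rightarrow> nat list \<Rightarrow> complex" where
  "div_form n k g xs = inverse (of_nat k) * wedge_sum (\<lambda>a. divergence n (g [a])) xs"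

lemma alternating_divergence_Cons:
  "g \<in> cochains n (gl_alg n) k 1 \<Longrightarrow> alternating (divergence n (g [a]))"
  unfolding divergence_def
  by (intro alternating_sum alternating_Cons alt_tensors_alternating cochains_gl_1_alt_tensors)

lemma alternating_div_form: "g \<in> cochains n (gl_alg n) k 1 \<Longrightarrow> alternating (div_form n k g)"
  unfolding div_form_def by (intro alternating_mult_left alternating_wedge_sum alternating_divergence_Cons)

lemma div_form_nonzeroD:
  assumes g: "g \<in> cochains n (gl_alg n) k 1" and "div_form n k g xs \<noteq> 0"
  shows "length xs = k \<and> (\<forall>x\<in>set xs. x < n)"
proof -
  have "wedge_sum (\<lambda>a. divergence n (g [a])) xs \<noteq> 0" using assms(2) by (simp add: div_form_def)
  then obtain j where j: "j < length xs" "divergence n (g [xs ! j]) (drop_nth j xs) \<noteq> 0"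
    using wedge_sum_nonzeroD by blast
  then show ?thesis
    using divergence_cochains_gl_1_nonzeroD[OF g j(2)] length_drop_nth_Suc[OF j(1)] set_drop_nth[OF j(1)]
    by auto
qed

lemma divergence_eq_div_form:
  assumes g: "g \<in> cochains n (gl_alg n) k 1"
    and closed: "\<And>a b ys. divergence n (spencer_d g [a, b]) ys = 0"
  shows "divergence n (g [a]) ys = div_form n k g (a # ys)"
proof -
  have "wedge_sum (\<lambda>a. divergence n (g [a])) (a # ys) = of_nat (Suc (length ys)) * divergence n (g [a]) ys"
  proof (rule wedge_sum_Cons_antisym)
    fix a b r
    have "- (divergence n (g [b]) (a # r) + divergence n (g [a]) (b # r)) = 0"
      using closed[of a b r] by (simp only: divergence_spencer_d_pair[OF g])
    then show "divergence n (g [b]) (a # r) + divergence n (g [a]) (b # r) = 0"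
      by (simp only: neg_equal_0_iff_equal)
  qed (rule alternating_divergence_Cons[OF g])
  moreover have "(of_nat k :: complex) \<noteq> 0" if "divergence n (g [a]) ys \<noteq> 0"
    using divergence_cochains_gl_1_nonzeroD[OF g that] by auto
  moreover have "Suc (length ys) = k" if "divergence n (g [a]) ys \<noteq> 0"
    using divergence_cochains_gl_1_nonzeroD[OF g that] by auto
  ultimately show ?thesis by (cases "divergence n (g [a]) ys = 0") (simp_all add: div_form_def)
qed

lemma sl_cocycle_primitive:
  assumes k: "k > 0" and w: "w \<in> cocycles n (sl_alg n) k 2"
  obtains g where "g \<in> cochains n (gl_alg n) k 1" "spencer_d g = w"
    "\<And>a b ys. divergence n (spencer_d g [a, b]) ys = 0"
proof
  have wc: "w \<in> cochains n (sl_alg n) k 2" and closed: "spencer_d w = (\<lambda>_ _ _. 0)"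
    using w unfolding cocycles_def by auto
  have P: "w ys \<in> alt_tensors n (k - 1)" for ys by (rule cochains_2_alt_tensors[OF wc k]) simp
  show "spencer_homotopy k w \<in> cochains n (gl_alg n) k 1" by (rule spencer_homotopy_cochains[OF k wc P])
  show d: "spencer_d (spencer_homotopy k w) = w" by (rule spencer_d_spencer_homotopy[OF k wc P closed])
  show "divergence n (spencer_d (spencer_homotopy k w) [a, b]) ys = 0" for a b ys
    using wc unfolding d cochains_sl_alg_iff by blast
qed

section \<open>Vanishing of \<open>H\<^sup>k\<^sup>,\<^sup>2\<close> for \<open>\<ss>\<ll>(n)\<close> when \<open>k \<noteq> n\<close>\<close>

lemma exists_divergence_potential:
  assumes alt: "alternating E" and supp: "\<And>xs. E xs \<noteq> 0 \<Longrightarrow> length xs = k \<and> (\<forall>x\<in>set xs. x < n)"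
    and "k \<noteq> n"
  obtains \<phi> where "\<phi> \<in> alt_tensors n (Suc k)" "\<And>zs. divergence n \<phi> zs = E zs"
proof
  define c :: complex where "c = inverse (of_nat n - of_nat k)"
  have c: "c * (of_nat n - of_nat k) = 1" using assms(3) by (simp add: c_def)
  show "(\<lambda>xs i. if i < n then c * basis_wedge i E xs else 0) \<in> alt_tensors n (Suc k)"
  proof (rule alt_tensorsI)
    fix xs i assume nz: "(if i < n then c * basis_wedge i E xs else 0) \<noteq> 0"
    then have "i < n" by (cases "i < n") simp_all
    have "basis_wedge i E xs \<noteq> 0"
    proof
      assume "basis_wedge i E xs = 0"
      then show False using nz \<open>i < n\<close> by simp
    qed
    then obtain j where j: "j < length xs" "xs ! j = i" "E (drop_nth j xs) \<noteq> 0"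
      by (blast dest: basis_wedge_nonzeroD)
    then show "length xs = Suc k \<and> (\<forall>x\<in>set xs. x < n) \<and> i < n"
      using supp[OF j(3)] length_drop_nth_Suc[OF j(1)] set_drop_nth[OF j(1)] \<open>i < n\<close> by auto
  next
    fix i show "alternating (\<lambda>xs. if i < n then c * basis_wedge i E xs else 0)"
      by (intro alternating_if alternating_mult_left alternating_basis_wedge alt)
  qed
  fix zs
  have "divergence n (\<lambda>xs i. if i < n then c * basis_wedge i E xs else 0) zs
      = c * (\<Sum>i<n. basis_wedge i E (i # zs))"
    by (simp add: divergence_def sum_distrib_left)
  also have "\<dots> = E zs" using sum_basis_wedge_Cons[OF alt supp] c by (simp add: mult.assoc[symmetric])
  finally show "divergence n (\<lambda>xs i. if i < n then c * basis_wedge i E xs else 0) zs = E zs" .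
qed

text \<open>The 1-cochain \<open>e\<^sub>a \<mapsto> [\<phi>, e\<^sub>a]\<close>; it is closed because \<open>\<phi>\<close> is alternating.\<close>
definition contraction_cochain :: "tens \<Rightarrow> cochain" where
  "contraction_cochain \<phi> = (\<lambda>ys xs i. if length ys = 1 then \<phi> (hd ys # xs) i else 0)"

lemma contraction_cochain_cochains:
  assumes "\<phi> \<in> alt_tensors n (Suc k)"
  shows "contraction_cochain \<phi> \<in> cochains n (gl_alg n) k 1"
proof (rule cochains_1I)
  fix ys xs i assume "contraction_cochain \<phi> ys xs i \<noteq> 0"
  then show "length ys = 1 \<and> (\<forall>y\<in>set ys. y < n)"
    using alt_tensorsD[OF assms] by (auto simp: contraction_cochain_def length_Suc_conv split: if_splits)
next
  fix ys
  have "contraction_cochain \<phi> ys = (if length ys = 1 then (\<lambda>xs. \<phi> (hd ys # xs)) else (\<lambda>_ _. 0))"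
    by (simp add: contraction_cochain_def fun_eq_iff)
  then show "contraction_cochain \<phi> ys \<in> prolong n (gl_alg n) k"
    using alt_tensors_Cons[OF assms] by (simp add: prolong_gl_alg zero_in_alt_tensors)
qed

lemma spencer_d_contraction_cochain:
  assumes "\<phi> \<in> alt_tensors n m"
  shows "spencer_d (contraction_cochain \<phi>) = (\<lambda>_ _ _. 0)"
proof (intro ext)
  fix ys xs i
  show "spencer_d (contraction_cochain \<phi>) ys xs i = 0"
  proof (cases "length ys = 2")
    case True
    then obtain a b where ys: "ys = [a, b]" by (auto simp: length_eq_2_iff)
    have "\<phi> (b # a # xs) i = - \<phi> (a # b # xs) i"
      by (rule alternating_swap[OF alt_tensors_alternating[OF assms]])
    then show ?thesis by (simp add: ys spencer_d_pair contraction_cochain_def)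
  next
    case False
    then show ?thesis
      by (intro spencer_d_eq_0_if_length[of _ 1])
        (auto simp: contraction_cochain_def numeral_2_eq_2 split: if_splits)
  qed
qed

lemma divergence_contraction_cochain:
  assumes "\<phi> \<in> alt_tensors n m"
  shows "divergence n (contraction_cochain \<phi> [a]) zs = - divergence n \<phi> (a # zs)"
proof -
  have "\<phi> (a # i # zs) i = - \<phi> (i # a # zs) i" for i
    by (rule alternating_swap[OF alt_tensors_alternating[OF assms]])
  then show ?thesis by (simp add: divergence_def contraction_cochain_def sum_negf)
qed

lemma spencer_H_zero_sl_alg:
  assumes k: "k > 0" and "k \<noteq> n"
  shows "spencer_H_zero n (sl_alg n) k 2"
  unfolding spencer_H_zero_def
proof
  fix w assume "w \<in> cocycles n (sl_alg n) k 2"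
  then obtain g where g: "g \<in> cochains n (gl_alg n) k 1" and dg: "spencer_d g = w"
    and closed: "\<And>a b ys. divergence n (spencer_d g [a, b]) ys = 0"
    using sl_cocycle_primitive[OF k] by blast
  obtain \<phi> where \<phi>: "\<phi> \<in> alt_tensors n (Suc k)" and div_\<phi>: "\<And>zs. divergence n \<phi> zs = div_form n k g zs"
    using exists_divergence_potential[OF alternating_div_form[OF g] div_form_nonzeroD[OF g] assms(2)]
    by blast
  define g' where "g' = (\<lambda>ys xs i. g ys xs i + 1 * contraction_cochain \<phi> ys xs i)"
  have "g' \<in> cochains n (gl_alg n) k 1"
    unfolding g'_def by (intro cochains_gl_add_mult g contraction_cochain_cochains \<phi>) simp
  moreover have "divergence n (g' ys) zs = 0" for ys zs
  proof (cases "length ys = 1")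
    case True
    then obtain a where "ys = [a]" by (auto simp: length_Suc_conv)
    then show ?thesis
      unfolding g'_def divergence_add_mult
      using divergence_eq_div_form[OF g closed, of a zs] divergence_contraction_cochain[OF \<phi>, of a zs] div_\<phi>
      by simp
  next
    case False
    then show ?thesis
      using cochains_eq_0[OF g False] by (simp add: g'_def contraction_cochain_def divergence_def)
  qed
  ultimately have "g' \<in> cochains n (sl_alg n) k 1" by (simp add: cochains_sl_alg_iff)
  moreover have "spencer_d g' = w"
  proof (intro ext)
    fix ys xs i
    show "spencer_d g' ys xs i = w ys xs i"
      unfolding g'_def spencer_d_add_mult spencer_d_contraction_cochain[OF \<phi>] dg by simp
  qed
  ultimately show "w \<in> coboundaries n (sl_alg n) k 2" by (rule coboundaries_2I)
qed

section \<open>The class of \<open>H\<^sup>n\<^sup>,\<^sup>2\<close> for \<open>\<ss>\<ll>(n)\<close>\<close>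

lemma alternating_top_degree_eq_vol:
  assumes alt: "alternating E" and supp: "\<And>xs. E xs \<noteq> 0 \<Longrightarrow> length xs = n \<and> (\<forall>x\<in>set xs. x < n)"
  shows "E xs = E [0..<n] * vol n xs"
proof -
  have "E xs - E [0..<n] * vol n xs = 0"
  proof (rule alternating_top_degree_eq_0[where n = n])
    show "alternating (\<lambda>xs. E xs - E [0..<n] * vol n xs)"
      by (intro alternating_diff alternating_mult_left alternating_vol alt)
    show "length ys = n \<and> (\<forall>x\<in>set ys. x < n)" if "E ys - E [0..<n] * vol n ys \<noteq> 0" for ys
    proof (cases "E ys = 0")
      case True
      then show ?thesis using that vol_nonzeroD[of n ys] by simp
    qed (rule supp)
  qed (simp add: vol_upt)
  then show ?thesis by simp
qed

text \<open>\<open>e\<^sub>a \<mapsto> e\<^sub>a \<otimes> vol\<close>; its differential spans \<open>H\<^sup>n\<^sup>,\<^sup>2\<close>.\<close>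
definition vol_cochain :: "nat \<Rightarrow> cochain" where
  "vol_cochain n = (\<lambda>ys xs i. if length ys = 1 \<and> hd ys < n \<and> i = hd ys then vol n xs else 0)"

lemma vol_cochain_cochains: "vol_cochain n \<in> cochains n (gl_alg n) n 1"
proof (rule cochains_1I)
  fix ys xs i assume "vol_cochain n ys xs i \<noteq> 0"
  then show "length ys = 1 \<and> (\<forall>y\<in>set ys. y < n)"
    by (auto simp: vol_cochain_def length_Suc_conv split: if_splits)
next
  fix ys
  have "vol_cochain n ys \<in> alt_tensors n n"
  proof (rule alt_tensorsI)
    fix xs i assume "vol_cochain n ys xs i \<noteq> 0"
    then show "length xs = n \<and> (\<forall>x\<in>set xs. x < n) \<and> i < n"
      using vol_nonzeroD by (auto simp: vol_cochain_def split: if_splits)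
  next
    fix i show "alternating (\<lambda>xs. vol_cochain n ys xs i)"
      unfolding vol_cochain_def by (intro alternating_if alternating_vol)
  qed
  then show "vol_cochain n ys \<in> prolong n (gl_alg n) n" by (simp add: prolong_gl_alg)
qed

lemma divergence_vol_cochain: "divergence n (vol_cochain n [a]) ys = vol n (a # ys)"
proof -
  have "divergence n (vol_cochain n [a]) ys = (if a < n then vol n (a # ys) else 0)"
    by (cases "a < n") (simp_all add: divergence_def vol_cochain_def)
  then show ?thesis using vol_nonzeroD[of n "a # ys"] by auto
qed

lemma spencer_d_vol_cochain_cocycle:
  assumes "n > 0"
  shows "spencer_d (vol_cochain n) \<in> cocycles n (sl_alg n) n 2"
proof -
  have "divergence n (spencer_d (vol_cochain n) ys) zs = 0" for ys zs
  proof (cases "length ys = 2")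
    case True
    then obtain a b where "ys = [a, b]" by (auto simp: length_eq_2_iff)
    then show ?thesis
      using alternating_swap[OF alternating_vol, of n b a zs]
      by (simp add: divergence_spencer_d_pair[OF vol_cochain_cochains] divergence_vol_cochain)
  next
    case False
    then have "spencer_d (vol_cochain n) ys = (\<lambda>_ _. 0)"
      using spencer_d_nonzeroD[OF vol_cochain_cochains] by (fastforce simp: numeral_2_eq_2)
    then show ?thesis by (simp add: divergence_def)
  qed
  then show ?thesis
    unfolding cocycles_def cochains_sl_alg_iff
    using spencer_d_cochains_1[OF vol_cochain_cochains assms]
      spencer_d_spencer_d_cochains_1[OF vol_cochain_cochains] by blast
qed

text \<open>A closed 1-cochain of degree \<open>n\<close> is the differential of an \<open>(n + 1)\<close>-form, and there are no
  nonzero \<open>(n + 1)\<close>-forms in \<open>n\<close> odd variables.\<close>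
lemma closed_cochain_1_top_degree_eq_0:
  assumes u: "u \<in> cochains n (gl_alg n) n 1" and closed: "spencer_d u = (\<lambda>_ _ _. 0)"
  shows "u = (\<lambda>_ _ _. 0)"
proof (intro ext)
  fix ys xs i
  show "u ys xs i = 0"
  proof (cases "length ys = 1")
    case True
    then obtain a where ys: "ys = [a]" by (auto simp: length_Suc_conv)
    define U where "U c r = u [c] r i" for c r
    have alt_U: "alternating (U c)" for c
      unfolding U_def by (rule alt_tensors_alternating[OF cochains_gl_1_alt_tensors[OF u]])
    have "wedge_sum U zs = 0" for zs
    proof (rule ccontr)
      assume nz: "wedge_sum U zs \<noteq> 0"
      then obtain j where j: "j < length zs" "u [zs ! j] (drop_nth j zs) i \<noteq> 0"
        using wedge_sum_nonzeroD[of U] by (auto simp: U_def)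
      then have "length zs = Suc n" "set zs \<subseteq> {..<n}"
        using alt_tensorsD[OF cochains_gl_1_alt_tensors[OF u] j(2)] cochains_supportD[OF u j(2)]
          length_drop_nth_Suc[OF j(1)] set_drop_nth[OF j(1)] by auto
      then have "\<not> distinct zs" using card_mono[of "{..<n}" "set zs"] distinct_card by fastforce
      moreover have "alternating (wedge_sum U)" by (rule alternating_wedge_sum) (rule alt_U)
      ultimately show False using alternating_not_distinct nz by blast
    qed
    moreover have "wedge_sum U (a # xs) = of_nat (Suc (length xs)) * U a xs"
    proof (rule wedge_sum_Cons_antisym[OF alt_U])
      fix a b r show "U b (a # r) + U a (b # r) = 0"
        using closed unfolding U_def by (metis spencer_d_pair)
    qed
    ultimately show ?thesis by (simp add: ys U_def del: of_nat_Suc)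
  next
    case False
    then show ?thesis using cochains_eq_0[OF u] by simp
  qed
qed

lemma spencer_d_vol_cochain_not_coboundary:
  assumes "n > 0"
  shows "spencer_d (vol_cochain n) \<notin> coboundaries n (sl_alg n) n 2"
proof
  assume "spencer_d (vol_cochain n) \<in> coboundaries n (sl_alg n) n 2"
  then obtain h where h: "h \<in> cochains n (sl_alg n) n 1" and dh: "spencer_d h = spencer_d (vol_cochain n)"
    unfolding coboundaries_def by (auto simp: numeral_2_eq_2)
  have hgl: "h \<in> cochains n (gl_alg n) n 1" using h by (simp add: cochains_sl_alg_iff)
  have "(\<lambda>ys xs i. vol_cochain n ys xs i + (-1) * h ys xs i) = (\<lambda>_ _ _. 0)"
  proof (rule closed_cochain_1_top_degree_eq_0)
    show "(\<lambda>ys xs i. vol_cochain n ys xs i + (-1) * h ys xs i) \<in> cochains n (gl_alg n) n 1"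
      by (intro cochains_gl_add_mult vol_cochain_cochains hgl) simp
    show "spencer_d (\<lambda>ys xs i. vol_cochain n ys xs i + (-1) * h ys xs i) = (\<lambda>_ _ _. 0)"
      unfolding spencer_d_add_mult dh by simp
  qed
  then have "h = vol_cochain n" by (simp add: fun_eq_iff)
  then have "vol n (0 # [1..<n]) = 0"
    using h divergence_vol_cochain[of n 0 "[1..<n]"] by (simp add: cochains_sl_alg_iff)
  then show False using vol_upt[of n] assms by (simp add: upt_conv_Cons)
qed

lemma spencer_H_dim1_sl_alg:
  assumes "n > 0"
  shows "spencer_H_dim1 n (sl_alg n) n 2"
  unfolding spencer_H_dim1_def
proof (intro bexI conjI ballI)
  show "spencer_d (vol_cochain n) \<in> cocycles n (sl_alg n) n 2"
    by (rule spencer_d_vol_cochain_cocycle[OF assms])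
  show "spencer_d (vol_cochain n) \<notin> coboundaries n (sl_alg n) n 2"
    by (rule spencer_d_vol_cochain_not_coboundary[OF assms])
  fix w assume "w \<in> cocycles n (sl_alg n) n 2"
  then obtain g where g: "g \<in> cochains n (gl_alg n) n 1" and dg: "spencer_d g = w"
    and closed: "\<And>a b ys. divergence n (spencer_d g [a, b]) ys = 0"
    using sl_cocycle_primitive[OF assms] by blast
  define c where "c = div_form n n g [0..<n]"
  define g' where "g' = (\<lambda>ys xs i. g ys xs i + (- c) * vol_cochain n ys xs i)"
  have "g' \<in> cochains n (gl_alg n) n 1"
    unfolding g'_def by (intro cochains_gl_add_mult g vol_cochain_cochains) simp
  moreover have "divergence n (g' ys) zs = 0" for ys zs
  proof (cases "length ys = 1")
    case True
    then obtain a where "ys = [a]" by (auto simp: length_Suc_conv)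
    moreover have "div_form n n g (a # zs) = c * vol n (a # zs)"
      unfolding c_def
      by (rule alternating_top_degree_eq_vol[OF alternating_div_form[OF g] div_form_nonzeroD[OF g]])
    ultimately show ?thesis
      unfolding g'_def divergence_add_mult
      using divergence_eq_div_form[OF g closed, of a zs] divergence_vol_cochain[of n a zs] by simp
  next
    case False
    then show ?thesis
      using cochains_eq_0[OF g False] cochains_eq_0[OF vol_cochain_cochains False]
      by (simp add: g'_def divergence_def)
  qed
  ultimately have "g' \<in> cochains n (sl_alg n) n 1" by (simp add: cochains_sl_alg_iff)
  moreover have "spencer_d g' = (\<lambda>ys xs i. w ys xs i - c * spencer_d (vol_cochain n) ys xs i)"
    unfolding g'_def spencer_d_add_mult dg by simp
  ultimately show "\<exists>c. (\<lambda>ys xs i. w ys xs i - c * spencer_d (vol_cochain n) ys xs i) \<in> coboundaries n (sl_alg n) n 2"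
    by (blast intro: coboundaries_2I)
qed

section \<open>\<open>\<ss>\<ll>(n)\<close> acts trivially on \<open>H\<^sup>n\<^sup>,\<^sup>2\<close>\<close>

lemma tens_act_eq_arg_action:
  "tens_act n X T xs i = (\<Sum>a<n. T xs a * X [a] i) - arg_action n (\<lambda>a b. X [a] b) (\<lambda>r. T r i) xs"
  unfolding tens_act_def arg_action_def by simp

lemma tens_act_alt_tensors:
  assumes X: "X \<in> gl_alg n" and T: "T \<in> alt_tensors n m"
  shows "tens_act n X T \<in> alt_tensors n m"
proof (rule alt_tensorsI)
  fix xs i assume "tens_act n X T xs i \<noteq> 0"
  then consider "(\<Sum>a<n. T xs a * X [a] i) \<noteq> 0" | "arg_action n (\<lambda>a b. X [a] b) (\<lambda>r. T r i) xs \<noteq> 0"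
    unfolding tens_act_eq_arg_action by fastforce
  then show "length xs = m \<and> (\<forall>x\<in>set xs. x < n) \<and> i < n"
  proof cases
    case 1
    then obtain a where "T xs a * X [a] i \<noteq> 0" by (blast elim: sum.not_neutral_contains_not_neutral)
    then show ?thesis using alt_tensorsD[OF T, of xs a] gl_alg_entry_nonzeroD[OF X, of a i] by simp
  next
    case 2
    then obtain j b where j: "j < length xs" "X [xs ! j] b \<noteq> 0" "T (xs[j := b]) i \<noteq> 0"
      using arg_action_nonzeroD by blast
    then show ?thesis
      using alt_tensorsD[OF T j(3)] gl_alg_entry_nonzeroD[OF X j(2)] set_subset_insert_list_update[OF j(1), of b]
      by auto
  qed
next
  fix i
  show "alternating (\<lambda>xs. tens_act n X T xs i)"
    unfolding tens_act_eq_arg_action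
    by (intro alternating_diff alternating_sum alternating_mult_right alternating_arg_action
        alt_tensors_alternating[OF T])
qed

lemma cochain_act_eq_0:
  assumes "\<And>zs. length zs = length ys \<Longrightarrow> f zs = (\<lambda>_ _. 0)"
  shows "cochain_act n X f ys = (\<lambda>_ _. 0)"
  using assms[of ys] assms[of "ys[_ := _]"] by (simp add: cochain_act_def tens_act_def fun_eq_iff)

lemma cochain_act_spencer_d_pair:
  "cochain_act n X (spencer_d g) [p, q] xs i = spencer_d (cochain_act n X g) [p, q] xs i"
proof -
  define A1 where "A1 = (\<Sum>a<n. g [q] (p # xs) a * X [a] i)"
  define A2 where "A2 = (\<Sum>a<n. g [p] (q # xs) a * X [a] i)"
  define B1 where "B1 = (\<Sum>j<length xs. \<Sum>b<n. X [xs ! j] b * g [q] (p # xs[j := b]) i)"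
  define B2 where "B2 = (\<Sum>j<length xs. \<Sum>b<n. X [xs ! j] b * g [p] (q # xs[j := b]) i)"
  define C1 where "C1 = (\<Sum>b<n. X [p] b * g [q] (b # xs) i)"
  define C2 where "C2 = (\<Sum>b<n. X [p] b * g [b] (q # xs) i)"
  define C3 where "C3 = (\<Sum>b<n. X [q] b * g [b] (p # xs) i)"
  define C4 where "C4 = (\<Sum>b<n. X [q] b * g [p] (b # xs) i)"
  have "tens_act n X (spencer_d g [p, q]) xs i = (A1 + A2) - (B1 + B2)"
    unfolding tens_act_def spencer_d_pair A1_def A2_def B1_def B2_def
    by (simp add: sum.distrib distrib_left distrib_right)
  moreover have "(\<Sum>j<length [p, q]. \<Sum>b<n. X [[p, q] ! j] b * spencer_d g ([p, q][j := b]) xs i)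
      = (C1 + C2) + (C3 + C4)"
    unfolding C1_def C2_def C3_def C4_def by (simp add: numeral_2_eq_2 spencer_d_pair sum.distrib distrib_left)
  ultimately have lhs: "cochain_act n X (spencer_d g) [p, q] xs i = (A1 + A2) - (B1 + B2) - ((C1 + C2) + (C3 + C4))"
    unfolding cochain_act_def by simp
  have r1: "cochain_act n X g [q] (p # xs) i = A1 - (C1 + B1) - C3"
    unfolding cochain_act_def tens_act_def A1_def B1_def C1_def C3_def length_Cons sum.lessThan_Suc_shift
    by simp
  have r2: "cochain_act n X g [p] (q # xs) i = A2 - (C4 + B2) - C2"
    unfolding cochain_act_def tens_act_def A2_def B2_def C4_def C2_def length_Cons sum.lessThan_Suc_shift
    by simp
  show ?thesis unfolding lhs spencer_d_pair r1 r2 by (simp add: algebra_simps)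
qed

lemma cochain_act_spencer_d:
  assumes g: "g \<in> cochains n G0 k 1"
  shows "cochain_act n X (spencer_d g) = spencer_d (cochain_act n X g)"
proof (intro ext)
  fix ys xs i
  show "cochain_act n X (spencer_d g) ys xs i = spencer_d (cochain_act n X g) ys xs i"
  proof (cases "length ys = 2")
    case True
    then obtain p q where "ys = [p, q]" by (auto simp: length_eq_2_iff)
    then show ?thesis by (simp add: cochain_act_spencer_d_pair)
  next
    case False
    have "spencer_d g zs = (\<lambda>_ _. 0)" if "length zs = length ys" for zs
      using spencer_d_nonzeroD[OF g, of zs] that False by (auto simp: fun_eq_iff)
    then have "cochain_act n X (spencer_d g) ys xs i = 0" by (simp add: cochain_act_eq_0)
    moreover have "cochain_act n X g zs = (\<lambda>_ _. 0)" if "length zs \<noteq> 1" for zs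
      using cochains_eq_0[OF g] that by (intro cochain_act_eq_0) auto
    then have "spencer_d (cochain_act n X g) ys xs i = 0"
      using False by (intro spencer_d_eq_0_if_length[of _ 1]) (auto simp: numeral_2_eq_2 fun_eq_iff)
    ultimately show ?thesis by simp
  qed
qed

lemma cochain_act_cochains_gl:
  assumes X: "X \<in> gl_alg n" and g: "g \<in> cochains n (gl_alg n) k 1"
  shows "cochain_act n X g \<in> cochains n (gl_alg n) k 1"
proof (rule cochains_1I)
  fix ys xs i assume nz: "cochain_act n X g ys xs i \<noteq> 0"
  have "length ys = 1"
    using cochains_eq_0[OF g] nz by (metis cochain_act_eq_0)
  then obtain q where ys: "ys = [q]" by (auto simp: length_Suc_conv)
  have "q < n"
  proof (rule ccontr)
    assume "\<not> q < n"
    then have "g [q] = (\<lambda>_ _. 0)" "X [q] b = 0" for b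
      using cochains_supportD[OF g, of "[q]"] gl_alg_entry_nonzeroD[OF X, of q b] by (auto simp: fun_eq_iff)
    then have "cochain_act n X g [q] xs i = 0" by (simp add: cochain_act_def tens_act_def)
    then show False using nz ys by simp
  qed
  then show "length ys = 1 \<and> (\<forall>y\<in>set ys. y < n)" using ys by simp
next
  fix ys
  have "cochain_act n X g ys = (\<lambda>xs i. tens_act n X (g ys) xs i
      + (-1) * (\<Sum>j<length ys. \<Sum>b<n. X [ys ! j] b * g (ys[j := b]) xs i))"
    by (simp add: cochain_act_def fun_eq_iff)
  also have "\<dots> \<in> alt_tensors n k"
    using g X by (intro alt_tensors_add_mult tens_act_alt_tensors alt_tensors_sum alt_tensors_mult
        cochains_gl_1_alt_tensors)
  finally show "cochain_act n X g ys \<in> prolong n (gl_alg n) k" by (simp add: prolong_gl_alg)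
qed

lemma divergence_cochain_act:
  assumes E: "\<And>a ys. divergence n (g [a]) ys = E (a # ys)"
  shows "divergence n (cochain_act n X g [q]) zs = - arg_action n (\<lambda>a b. X [a] b) E (q # zs)"
proof -
  let ?M = "\<lambda>a b. X [a] b"
  have "divergence n (cochain_act n X g [q]) zs
      = (\<Sum>i<n. \<Sum>a<n. g [q] (i # zs) a * X [a] i)
        - ((\<Sum>i<n. \<Sum>b<n. X [i] b * g [q] (b # zs) i) + (\<Sum>i<n. arg_action n ?M (\<lambda>r. g [q] (i # r) i) zs))
        - (\<Sum>i<n. \<Sum>b<n. X [q] b * g [b] (i # zs) i)"
    by (simp add: divergence_def cochain_act_def tens_act_eq_arg_action arg_action_Cons
        sum_subtractf sum.distrib)
  also have "(\<Sum>i<n. \<Sum>a<n. g [q] (i # zs) a * X [a] i) = (\<Sum>i<n. \<Sum>b<n. X [i] b * g [q] (b # zs) i)"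
    by (subst sum.swap) (simp add: mult.commute)
  also have "(\<Sum>i<n. arg_action n ?M (\<lambda>r. g [q] (i # r) i) zs) = arg_action n ?M (\<lambda>r. E (q # r)) zs"
    by (simp add: arg_action_sum divergence_def[symmetric] E)
  also have "(\<Sum>i<n. \<Sum>b<n. X [q] b * g [b] (i # zs) i) = (\<Sum>b<n. X [q] b * E (b # zs))"
    by (subst sum.swap) (simp add: sum_distrib_left[symmetric] divergence_def[symmetric] E)
  finally show ?thesis by (simp add: arg_action_Cons)
qed

lemma spencer_H_trivial_sl_alg:
  assumes "n > 0"
  shows "spencer_H_trivial n (sl_alg n) n 2"
  unfolding spencer_H_trivial_def
proof (intro ballI)
  fix X w assume X: "X \<in> sl_alg n" and "w \<in> cocycles n (sl_alg n) n 2"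
  then obtain g where g: "g \<in> cochains n (gl_alg n) n 1" and dg: "spencer_d g = w"
    and closed: "\<And>a b ys. divergence n (spencer_d g [a, b]) ys = 0"
    using sl_cocycle_primitive[OF assms] by blast
  have Xgl: "X \<in> gl_alg n" using X sl_alg_subset_gl_alg by blast
  have "divergence n (cochain_act n X g ys) zs = 0" for ys zs
  proof (cases "length ys = 1")
    case True
    then obtain q where ys: "ys = [q]" by (auto simp: length_Suc_conv)
    have "arg_action n (\<lambda>a b. X [a] b) (div_form n n g) (q # zs) = (\<Sum>a<n. X [a] a) * div_form n n g (q # zs)"
      using gl_alg_entry_nonzeroD[OF Xgl]
      by (intro arg_action_top_degree alternating_div_form[OF g] div_form_nonzeroD[OF g]) blast+
    then show ?thesis
      using divergence_cochain_act[OF divergence_eq_div_form[OF g closed]] sl_alg_trace[OF X] ys by simp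
  next
    case False
    then show ?thesis
      using cochains_eq_0[OF cochain_act_cochains_gl[OF Xgl g] False] by (simp add: divergence_def)
  qed
  then have "cochain_act n X g \<in> cochains n (sl_alg n) n 1"
    unfolding cochains_sl_alg_iff using cochain_act_cochains_gl[OF Xgl g] by blast
  moreover have "spencer_d (cochain_act n X g) = cochain_act n X w"
    using cochain_act_spencer_d[OF g] dg by simp
  ultimately show "cochain_act n X w \<in> coboundaries n (sl_alg n) n 2" by (rule coboundaries_2I)
qed

theorem theorem2p1:
  fixes n :: nat
  assumes "n > 1"
  shows "(\<forall>k>0. spencer_H_zero n (gl_alg n) k 2)
       \<and> (\<forall>k>0. k \<noteq> n \<longrightarrow> spencer_H_zero n (sl_alg n) k 2)
       \<and> spencer_H_dim1 n (sl_alg n) n 2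
       \<and> spencer_H_trivial n (sl_alg n) n 2
       \<and> spencer_parity n 2 = n mod 2"
proof -
  have "n > 0" using assms by simp
  then show ?thesis
    using spencer_H_zero_gl_alg spencer_H_zero_sl_alg spencer_H_dim1_sl_alg spencer_H_trivial_sl_alg
    by (simp add: spencer_parity_def)
qed

end
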